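(* For every regular language $T\subseteq(\Sigma\cup\Gamma)^*$ of finite shiftlag, the set $\mathit{minsync}(T,T)$ is regular.
   Context: $\Sigma,\Gamma$ are disjoint finite alphabets. For $w\in(\Sigma\cup\Gamma)^*$, $\llbracket w\rrbracket=(\pi_{\mathtt i}(w),\pi_{\mathtt o}(w))$ where $\pi_{\mathtt i}$ (resp. $\pi_{\mathtt o}$) deletes all letters of $\Gamma$ (resp. $\Sigma$), and $\llbracket L\rrbracket=\{\llbracket w\rrbracket:w\in L\}$. A position $i$ of $w$ is $\geq k$-lagged if the absolute difference between the numbers of $\Sigma$-letters and $\Gamma$-letters in $w[1..i]$ is at least $k$. A shift of $w$ is a position $i\in\{1,\dots,|w|-1\}$ with exactly one of $w[i],w[i+1]$ in $\Sigma$; shifts $i<j$ are consecutive if no shift lies strictly between them. $\mathit{shift}(w)$ is the number of shifts; $\mathit{shiftlag}(w)$ is the maximal $n$ such that $w$ contains $n$ consecutive shifts all $\geq n$-lagged. A language has finite shift (resp. finite shiftlag) if the supremum of $\mathit{shift}$ (resp. $\mathit{shiftlag}$) over its words is finite; $\mathrm{Reg}_{\mathsf{FS}}$ denotes the class of regular languages of finite shift. For $x\in(\Sigma\cup\Gamma)^*$, $x^{-1}T=\{z: xz\in T\}$, and $w[1,i]$ is the prefix of $w$ of length $i$. For $w,w'\in T$ with $\llbracket w\rrbracket=\llbracket w'\rrbracket$, write $w\preceq_T w'$ if for all $i\le|w|$, $(w'[1,i])^{-1}T\in\mathrm{Reg}_{\mathsf{FS}}$ implies $(w[1,i])^{-1}T\in\mathrm{Reg}_{\mathsf{FS}}$.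 For languages $S,T$, $\mathit{minsync}(S,T)=\{w\in T:\llbracket w\rrbracket\in\llbracket S\rrbracket,\ w\preceq_T w'\text{ for all }w'\in T\text{ with }\llbracket w'\rrbracket=\llbracket w\rrbracket\}$. *)

theory Defs
  imports Main
begin

text \<open>Words over the alphabet Sig \<union> Gam are lists; positions are 1-based as in the paper.\<close>

definition regular_lang :: "'a set \<Rightarrow> 'a list set \<Rightarrow> bool" where
  "regular_lang A L \<longleftrightarrow> L \<subseteq> lists A \<and>
     (\<exists>(Q::nat set) q0 (\<delta>::nat \<Rightarrow> 'a \<Rightarrow> nat) F.
        finite Q \<and> q0 \<in> Q \<and> (\<forall>q\<in>Q. \<forall>a\<in>A. \<delta> q a \<in> Q) \<and> F \<subseteq> Q \<and>
        (\<forall>w\<in>lists A. w \<in> L \<longleftrightarrow> foldl \<delta> q0 w \<in> F))"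

definition proj_i :: "'a set \<Rightarrow> 'a list \<Rightarrow> 'a list" where
  "proj_i Sig w = filter (\<lambda>x. x \<in> Sig) w"

definition proj_o :: "'a set \<Rightarrow> 'a list \<Rightarrow> 'a list" where
  "proj_o Gam w = filter (\<lambda>x. x \<in> Gam) w"

definition sem :: "'a set \<Rightarrow> 'a set \<Rightarrow> 'a list \<Rightarrow> 'a list \<times> 'a list" where
  "sem Sig Gam w = (proj_i Sig w, proj_o Gam w)"

definition lag :: "'a set \<Rightarrow> 'a set \<Rightarrow> 'a list \<Rightarrow> nat \<Rightarrow> nat" where
  "lag Sig Gam w i = nat \<bar>int (length (filter (\<lambda>x. x \<in> Sig) (take i w)))
                             - int (length (filter (\<lambda>x. x \<in> Gam) (take i w)))\<bar>"

definition shifts :: "'a set \<Rightarrow> 'a list \<Rightarrow> nat set" where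
  "shifts Sig w = {i. 1 \<le> i \<and> i \<le> length w - 1 \<and>
                        ((w ! (i - 1) \<in> Sig) \<noteq> (w ! i \<in> Sig))}"

definition shift :: "'a set \<Rightarrow> 'a list \<Rightarrow> nat" where
  "shift Sig w = card (shifts Sig w)"

text \<open>w contains n consecutive shifts all \<ge>n-lagged: n consecutive entries of the
  increasingly sorted list of shifts.\<close>
definition has_lagged_shifts :: "'a set \<Rightarrow> 'a set \<Rightarrow> 'a list \<Rightarrow> nat \<Rightarrow> bool" where
  "has_lagged_shifts Sig Gam w n \<longleftrightarrow>
     (let S = sorted_list_of_set (shifts Sig w) in
       \<exists>j. j + n \<le> length S \<and> (\<forall>k<n. lag Sig Gam w (S ! (j + k)) \<ge> n))"

definition shiftlag :: "'a set \<Rightarrow> 'a set \<Rightarrow> 'a list \<Rightarrow> nat" where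
  "shiftlag Sig Gam w = Max {n. has_lagged_shifts Sig Gam w n}"

definition finite_shift :: "'a set \<Rightarrow> 'a list set \<Rightarrow> bool" where
  "finite_shift Sig L \<longleftrightarrow> bdd_above (shift Sig ` L)"

definition finite_shiftlag :: "'a set \<Rightarrow> 'a set \<Rightarrow> 'a list set \<Rightarrow> bool" where
  "finite_shiftlag Sig Gam L \<longleftrightarrow> bdd_above (shiftlag Sig Gam ` L)"

definition RegFS :: "'a set \<Rightarrow> 'a set \<Rightarrow> 'a list set \<Rightarrow> bool" where
  "RegFS Sig Gam L \<longleftrightarrow> regular_lang (Sig \<union> Gam) L \<and> finite_shift Sig L"

definition lquot :: "'a list \<Rightarrow> 'a list set \<Rightarrow> 'a list set" where
  "lquot x T = {z. x @ z \<in> T}"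

definition preceq :: "'a set \<Rightarrow> 'a set \<Rightarrow> 'a list set \<Rightarrow> 'a list \<Rightarrow> 'a list \<Rightarrow> bool" where
  "preceq Sig Gam T w w' \<longleftrightarrow> w \<in> T \<and> w' \<in> T \<and> sem Sig Gam w = sem Sig Gam w' \<and>
     (\<forall>i \<le> length w. RegFS Sig Gam (lquot (take i w') T) \<longrightarrow>
                      RegFS Sig Gam (lquot (take i w) T))"

definition minsync :: "'a set \<Rightarrow> 'a set \<Rightarrow> 'a list set \<Rightarrow> 'a list set \<Rightarrow> 'a list set" where
  "minsync Sig Gam S T = {w \<in> T. sem Sig Gam w \<in> sem Sig Gam ` S \<and>
      (\<forall>w'\<in>T. sem Sig Gam w' = sem Sig Gam w \<longrightarrow> preceq Sig Gam T w w')}"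

end

theory Submission
  imports Defs
begin

text \<open>
  Whether a quotient \<open>x\<^sup>-\<^sup>1T\<close> is regular with finite shift depends only on the
  state reached by \<open>x\<close>, so \<open>minsync(T, T)\<close> is \<open>T\<close> minus the words \<open>w\<close> for which some
  synchronization \<open>w'\<close> in \<open>T\<close> reaches a finite-shift state at a position where \<open>w\<close> does not.

  The crux is that prefixes leading to the other states have bounded lag: a large lag would either
  come from a shift-free loop that could be pumped, or make \<open>K + 1\<close> consecutive shifts lagged,
  contradicting the shiftlag bound \<open>K\<close>. Hence, up to the first position where \<open>w'\<close> reaches a
  finite-shift state, \<open>w\<close> and a guessed \<open>w'\<close> can be read in lockstep by a finite automaton that
  buffers the boundedly many letters one has read ahead of the other. From that position on, the
  residual language of \<open>w'\<close> has finite shift, so the pairs of projections of its words form a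
  recognizable relation (a finite union of products of regular languages), which makes the
  remaining condition on the suffix of \<open>w\<close> regular.
\<close>

section \<open>Regularity via finitely many left quotients\<close>

lemma lquot_Nil [simp]: "lquot [] L = L"
  by (simp add: lquot_def)

lemma lquot_lquot [simp]: "lquot y (lquot x L) = lquot (x @ y) L"
  by (simp add: lquot_def)

lemma lquot_subset_lists: "L \<subseteq> lists A \<Longrightarrow> lquot x L \<subseteq> lists A"
  unfolding lquot_def by auto

definition nerode_regular :: "'a set \<Rightarrow> 'a list set \<Rightarrow> bool" where
  "nerode_regular A L \<longleftrightarrow> L \<subseteq> lists A \<and> finite ((\<lambda>x. lquot x L) ` lists A)"

lemma nerode_regularI:
  assumes "L \<subseteq> lists A" "finite S" "\<And>x. x \<in> lists A \<Longrightarrow> lquot x L \<in> S"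
  shows "nerode_regular A L"
proof -
  have "(\<lambda>x. lquot x L) ` lists A \<subseteq> S" using assms(3) by blast
  then show ?thesis unfolding nerode_regular_def using assms(1,2) finite_subset by blast
qed

lemma nerode_regular_subset_lists: "nerode_regular A L \<Longrightarrow> L \<subseteq> lists A"
  by (simp add: nerode_regular_def)

lemma finite_lquots: "nerode_regular A L \<Longrightarrow> finite ((\<lambda>x. lquot x L) ` lists A)"
  by (simp add: nerode_regular_def)

lemma foldl_in_closed:
  assumes "\<forall>q\<in>Q. \<forall>a\<in>A. \<delta> q a \<in> Q" "q \<in> Q" "w \<in> lists A"
  shows "foldl \<delta> q w \<in> Q"
  using assms(2,3) by (induction w arbitrary: q) (use assms(1) in auto)

lemma nerode_regular_dfa:
  assumes "finite Q" "\<forall>q\<in>Q. \<forall>a\<in>A. \<delta> q a \<in> Q" "q \<in> Q"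
  shows "nerode_regular A {z \<in> lists A. foldl \<delta> q z \<in> F}"
proof (rule nerode_regularI)
  show "finite ((\<lambda>p. {z \<in> lists A. foldl \<delta> p z \<in> F}) ` Q)"
    using assms(1) by simp
  fix x assume "x \<in> lists A"
  then have "lquot x {z \<in> lists A. foldl \<delta> q z \<in> F} = {z \<in> lists A. foldl \<delta> (foldl \<delta> q x) z \<in> F}"
    and "foldl \<delta> q x \<in> Q"
    using foldl_in_closed[OF assms(2,3)] by (auto simp: lquot_def)
  then show "lquot x {z \<in> lists A. foldl \<delta> q z \<in> F} \<in> (\<lambda>p. {z \<in> lists A. foldl \<delta> p z \<in> F}) ` Q"
    by blast
qed blast

text \<open>The Myhill--Nerode construction: the quotients themselves, numbered by an injection into
  \<open>nat\<close>, are the states.\<close>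
lemma nerode_regular_imp_regular_lang:
  assumes "finite A" "nerode_regular A L"
  shows "regular_lang A L"
proof -
  let ?Qs = "(\<lambda>x. lquot x L) ` lists A"
  have fin: "finite ?Qs" and sub: "L \<subseteq> lists A" using assms by (auto simp: nerode_regular_def)
  obtain f :: "'a list set \<Rightarrow> nat" where f: "inj_on f ?Qs"
    using finite_imp_inj_to_nat_seg[OF fin] by blast
  define \<delta> where "\<delta> q a = f (lquot [a] (the_inv_into ?Qs f q))" for q a
  have run: "foldl \<delta> (f (lquot x L)) w = f (lquot (x @ w) L)"
    if "x \<in> lists A" "w \<in> lists A" for x w
    using that
  proof (induction w arbitrary: x)
    case (Cons a w)
    have "lquot x L \<in> ?Qs" using Cons.prems by blast
    then have "\<delta> (f (lquot x L)) a = f (lquot (x @ [a]) L)"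
      unfolding \<delta>_def using f by (simp add: the_inv_into_f_f)
    then show ?case using Cons by simp
  qed simp
  have closed: "\<forall>q\<in>f ` ?Qs. \<forall>a\<in>A. \<delta> q a \<in> f ` ?Qs"
  proof (intro ballI)
    fix q a assume "q \<in> f ` ?Qs" "a \<in> A"
    then obtain x where "x \<in> lists A" "q = f (lquot x L)" by auto
    then show "\<delta> q a \<in> f ` ?Qs" using run[of x "[a]"] \<open>a \<in> A\<close> by auto
  qed
  have accept: "\<forall>w\<in>lists A. w \<in> L \<longleftrightarrow> foldl \<delta> (f L) w \<in> f ` {M \<in> ?Qs. [] \<in> M}"
  proof
    fix w assume w: "w \<in> lists A"
    have "foldl \<delta> (f L) w \<in> f ` {M \<in> ?Qs. [] \<in> M} \<longleftrightarrow> lquot w L \<in> {M \<in> ?Qs. [] \<in> M}"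
      unfolding run[of "[]" w, simplified, OF w] using f w by (intro inj_on_image_mem_iff) auto
    then show "w \<in> L \<longleftrightarrow> foldl \<delta> (f L) w \<in> f ` {M \<in> ?Qs. [] \<in> M}"
      using w by (auto simp: lquot_def)
  qed
  have "f L \<in> f ` ?Qs" by (rule imageI, rule image_eqI[of _ _ "[]"]) auto
  then show ?thesis unfolding regular_lang_def
    by (intro conjI sub exI[of _ "f ` ?Qs"] exI[of _ "f L"] exI[of _ \<delta>]
        exI[of _ "f ` {M \<in> ?Qs. [] \<in> M}"]) (use fin closed accept in auto)
qed

lemma nerode_regular_binop:
  assumes "nerode_regular A L" "nerode_regular A M" "N \<subseteq> lists A"
    "\<And>x. x \<in> lists A \<Longrightarrow> lquot x N = h (lquot x L) (lquot x M)"
  shows "nerode_regular A N"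
proof (rule nerode_regularI)
  show "finite ((\<lambda>(X, Y). h X Y) ` (((\<lambda>x. lquot x L) ` lists A) \<times> ((\<lambda>x. lquot x M) ` lists A)))"
    using finite_lquots[OF assms(1)] finite_lquots[OF assms(2)] by simp
qed (use assms(3,4) in force)+

lemma nerode_regular_Un:
  assumes "nerode_regular A L" "nerode_regular A M"
  shows "nerode_regular A (L \<union> M)"
  by (rule nerode_regular_binop[OF assms, where h = "(\<union>)"])
    (use assms[THEN nerode_regular_subset_lists] in \<open>auto simp: lquot_def\<close>)

lemma nerode_regular_Int:
  assumes "nerode_regular A L" "nerode_regular A M"
  shows "nerode_regular A (L \<inter> M)"
  by (rule nerode_regular_binop[OF assms, where h = "(\<inter>)"])
    (use assms[THEN nerode_regular_subset_lists] in \<open>auto simp: lquot_def\<close>)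

lemma nerode_regular_Diff:
  assumes "nerode_regular A L" "nerode_regular A M"
  shows "nerode_regular A (L - M)"
  by (rule nerode_regular_binop[OF assms, where h = "(-)"])
    (use assms[THEN nerode_regular_subset_lists] in \<open>auto simp: lquot_def\<close>)

lemma nerode_regular_empty: "nerode_regular A {}"
  by (rule nerode_regularI[where S = "{{}}"]) (auto simp: lquot_def)

lemma nerode_regular_UN:
  "finite I \<Longrightarrow> (\<And>i. i \<in> I \<Longrightarrow> nerode_regular A (M i)) \<Longrightarrow> nerode_regular A (\<Union>i\<in>I. M i)"
  by (induction I rule: finite_induct) (auto intro: nerode_regular_empty nerode_regular_Un)

lemma nerode_regular_singleton:
  assumes "u \<in> lists A"
  shows "nerode_regular A {u}"
proof (rule nerode_regularI[where S = "insert {} ((\<lambda>k. {drop k u}) ` {..length u})"])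
  fix x
  show "lquot x {u} \<in> insert {} ((\<lambda>k. {drop k u}) ` {..length u})"
  proof (cases "\<exists>z. x @ z = u")
    case True
    then have "lquot x {u} = {drop (length x) u}" "length x \<le> length u"
      by (auto simp: lquot_def)
    then show ?thesis by blast
  qed (auto simp: lquot_def)
qed (use assms in auto)

lemma nerode_regular_lists: "B \<subseteq> A \<Longrightarrow> nerode_regular A (lists B)"
  by (rule nerode_regularI[where S = "{{}, lists B}"]) (auto simp: lquot_def)

lemma nerode_regular_lquot:
  assumes "nerode_regular A L"
  shows "nerode_regular A (lquot u L)"
proof (cases "u \<in> lists A")
  case True
  show ?thesis
    by (rule nerode_regularI[OF lquot_subset_lists[OF nerode_regular_subset_lists[OF assms]]
          finite_lquots[OF assms]]) (use True in auto)
next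
  case False
  then have "lquot u L = {}"
    using nerode_regular_subset_lists[OF assms] by (auto simp: lquot_def)
  then show ?thesis using nerode_regular_empty by simp
qed

definition conc :: "'a list set \<Rightarrow> 'a list set \<Rightarrow> 'a list set" where
  "conc L M = {u @ v | u v. u \<in> L \<and> v \<in> M}"

lemma lquot_conc:
  "lquot x (conc L M) = conc (lquot x L) M \<union> \<Union>{lquot s M | s. \<exists>r. x = r @ s \<and> r \<in> L}"
proof (intro set_eqI iffI)
  fix z assume "z \<in> lquot x (conc L M)"
  then obtain u v where uv: "x @ z = u @ v" "u \<in> L" "v \<in> M" by (auto simp: lquot_def conc_def)
  then obtain us where "x = u @ us \<and> us @ z = v \<or> x @ us = u \<and> z = us @ v"
    using append_eq_append_conv2[of x z u v] by blast
  then show "z \<in> conc (lquot x L) M \<union> \<Union>{lquot s M | s. \<exists>r. x = r @ s \<and> r \<in> L}"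
  proof
    assume "x = u @ us \<and> us @ z = v"
    then show ?thesis using uv by (auto simp: lquot_def)
  next
    assume "x @ us = u \<and> z = us @ v"
    then show ?thesis using uv by (auto simp: lquot_def conc_def)
  qed
qed (auto simp: lquot_def conc_def, (metis append.assoc)+)

lemma nerode_regular_conc:
  assumes "nerode_regular A L" "nerode_regular A M"
  shows "nerode_regular A (conc L M)"
proof (rule nerode_regularI)
  show "conc L M \<subseteq> lists A"
    using assms[THEN nerode_regular_subset_lists] by (force simp: conc_def)
  show "finite ((\<lambda>(X, Y). conc X M \<union> \<Union>Y) `
      (((\<lambda>x. lquot x L) ` lists A) \<times> Pow ((\<lambda>x. lquot x M) ` lists A)))"
    using assms[THEN finite_lquots] by simp
  fix x assume "x \<in> lists A"
  then have "{lquot s M | s. \<exists>r. x = r @ s \<and> r \<in> L} \<subseteq> (\<lambda>x. lquot x M) ` lists A"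
    by auto
  with \<open>x \<in> lists A\<close> show "lquot x (conc L M) \<in> (\<lambda>(X, Y). conc X M \<union> \<Union>Y) `
      (((\<lambda>x. lquot x L) ` lists A) \<times> Pow ((\<lambda>x. lquot x M) ` lists A))"
    unfolding lquot_conc by (intro image_eqI[of _ _ "(lquot x L, _)"]) auto
qed

lemma nerode_regular_filter_preimage:
  assumes "nerode_regular A X"
  shows "nerode_regular A {z \<in> lists A. filter P z \<in> X}"
proof (rule nerode_regularI)
  show "finite ((\<lambda>Y. {z \<in> lists A. filter P z \<in> Y}) ` (\<lambda>x. lquot x X) ` lists A)"
    using finite_lquots[OF assms] by simp
  fix x assume "x \<in> lists A"
  then have "lquot x {z \<in> lists A. filter P z \<in> X} = {z \<in> lists A. filter P z \<in> lquot (filter P x) X}"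
    and "filter P x \<in> lists A" by (auto simp: lquot_def)
  then show "lquot x {z \<in> lists A. filter P z \<in> X}
      \<in> (\<lambda>Y. {z \<in> lists A. filter P z \<in> Y}) ` (\<lambda>x. lquot x X) ` lists A" by blast
qed blast

lemma nerode_regular_realign:
  assumes "nerode_regular A U" "b \<in> lists A"
  shows "nerode_regular A {s'. \<exists>s\<in>U. b @ s = a @ s'}"
proof -
  have "{s'. \<exists>s\<in>U. b @ s = a @ s'} = lquot a (conc {b} U)"
    unfolding lquot_def conc_def by auto metis
  then show ?thesis
    using nerode_regular_lquot[OF nerode_regular_conc[OF nerode_regular_singleton[OF assms(2)] assms(1)]]
    by simp
qed

fun run :: "('s \<times> 'a \<times> 's) set \<Rightarrow> 's \<Rightarrow> 'a list \<Rightarrow> 's \<Rightarrow> bool" where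
  "run D s [] t \<longleftrightarrow> s = t"
| "run D s (a # w) t \<longleftrightarrow> (\<exists>s'. (s, a, s') \<in> D \<and> run D s' w t)"

lemma run_append: "run D s (u @ v) t \<longleftrightarrow> (\<exists>m. run D s u m \<and> run D m v t)"
  by (induction u arbitrary: s) auto

lemma run_snoc: "run D s (u @ [a]) t \<longleftrightarrow> (\<exists>m. run D s u m \<and> (m, a, t) \<in> D)"
  by (simp add: run_append)

lemma run_closed:
  "run D s w t \<Longrightarrow> s \<in> S \<Longrightarrow> (\<And>s a t. (s, a, t) \<in> D \<Longrightarrow> s \<in> S \<Longrightarrow> t \<in> S) \<Longrightarrow> t \<in> S"
  by (induction w arbitrary: s) auto

text \<open>Subset construction: a quotient is determined by the set of states reached.\<close>
lemma nerode_regular_nfa: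
  assumes "finite S" "I \<subseteq> S" "\<And>s a t. (s, a, t) \<in> D \<Longrightarrow> s \<in> S \<Longrightarrow> t \<in> S"
  shows "nerode_regular A {w \<in> lists A. \<exists>s\<in>I. \<exists>t\<in>Fn. run D s w t}"
proof (rule nerode_regularI[where S = "(\<lambda>R. {z \<in> lists A. \<exists>s\<in>R. \<exists>t\<in>Fn. run D s z t}) ` Pow S"])
  fix x assume "x \<in> lists A"
  then have "lquot x {w \<in> lists A. \<exists>s\<in>I. \<exists>t\<in>Fn. run D s w t}
      = {z \<in> lists A. \<exists>s\<in>{t. \<exists>s\<in>I. run D s x t}. \<exists>t\<in>Fn. run D s z t}"
    by (auto simp: lquot_def run_append)
  moreover have "{t. \<exists>s\<in>I. run D s x t} \<in> Pow S"
    using run_closed[of D _ x _ S] assms(2,3) by blast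
  ultimately show "lquot x {w \<in> lists A. \<exists>s\<in>I. \<exists>t\<in>Fn. run D s w t}
      \<in> (\<lambda>R. {z \<in> lists A. \<exists>s\<in>R. \<exists>t\<in>Fn. run D s z t}) ` Pow S" by blast
qed (use assms(1) in auto)

lemma run_take_steps:
  assumes "\<And>j. j < n \<Longrightarrow> (c j, w ! j, c (Suc j)) \<in> D" "n \<le> length w"
  shows "run D (c 0) (take n w) (c n)"
  using assms
proof (induction n)
  case (Suc n)
  have "run D (c 0) (take n w) (c n)"
  proof (rule Suc.IH)
    show "(c j, w ! j, c (Suc j)) \<in> D" if "j < n" for j using Suc.prems(1) that by simp
  qed (use Suc.prems(2) in simp)
  moreover have "(c n, w ! n, c (Suc n)) \<in> D" using Suc.prems(1) by simp
  ultimately have "run D (c 0) (take n w @ [w ! n]) (c (Suc n))" unfolding run_snoc by blast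
  then show ?case using Suc.prems(2) by (simp add: take_Suc_conv_app_nth)
qed simp

section \<open>Recognizable relations\<close>

definition recognizable :: "'a set \<Rightarrow> ('a list \<times> 'a list) set \<Rightarrow> bool" where
  "recognizable A R \<longleftrightarrow> (\<exists>P. finite P \<and> (\<forall>(U, V)\<in>P. nerode_regular A U \<and> nerode_regular A V)
     \<and> R = (\<Union>(U, V)\<in>P. U \<times> V))"

lemma recognizable_Times:
  "nerode_regular A U \<Longrightarrow> nerode_regular A V \<Longrightarrow> recognizable A (U \<times> V)"
  unfolding recognizable_def by (intro exI[of _ "{(U, V)}"]) simp

lemma recognizable_Un:
  assumes "recognizable A R1" "recognizable A R2"
  shows "recognizable A (R1 \<union> R2)"
proof -
  obtain P1 P2 where
    "finite P1" "\<forall>(U, V)\<in>P1. nerode_regular A U \<and> nerode_regular A V" "R1 = (\<Union>(U, V)\<in>P1. U \<times> V)"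
    "finite P2" "\<forall>(U, V)\<in>P2. nerode_regular A U \<and> nerode_regular A V" "R2 = (\<Union>(U, V)\<in>P2. U \<times> V)"
    using assms unfolding recognizable_def by blast
  then show ?thesis unfolding recognizable_def by (intro exI[of _ "P1 \<union> P2"]) auto
qed

lemma recognizable_UN:
  "finite I \<Longrightarrow> (\<And>i. i \<in> I \<Longrightarrow> recognizable A (R i)) \<Longrightarrow> recognizable A (\<Union>i\<in>I. R i)"
proof (induction I rule: finite_induct)
  case empty
  show ?case unfolding recognizable_def by (intro exI[of _ "{}"]) simp
qed (simp add: recognizable_Un)

lemma recognizable_rel_image:
  assumes "recognizable A R"
    and "\<And>U. nerode_regular A U \<Longrightarrow> nerode_regular A {s'. \<exists>s\<in>U. r1 s s'}"
    and "\<And>V. nerode_regular A V \<Longrightarrow> nerode_regular A {t'. \<exists>t\<in>V. r2 t t'}"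
  shows "recognizable A {(s', t'). \<exists>(s, t)\<in>R. r1 s s' \<and> r2 t t'}"
proof -
  obtain P where P: "finite P" "\<forall>(U, V)\<in>P. nerode_regular A U \<and> nerode_regular A V"
    "R = (\<Union>(U, V)\<in>P. U \<times> V)"
    using assms(1) unfolding recognizable_def by blast
  define img where "img U r = {s'. \<exists>s\<in>U. r s s'}" for U and r :: "'a list \<Rightarrow> 'a list \<Rightarrow> bool"
  have "{(s', t'). \<exists>(s, t)\<in>R. r1 s s' \<and> r2 t t'}
      = (\<Union>(U, V)\<in>(\<lambda>(U, V). (img U r1, img V r2)) ` P. U \<times> V)"
    unfolding P(3) img_def by fast
  moreover have "\<forall>(U, V)\<in>(\<lambda>(U, V). (img U r1, img V r2)) ` P. nerode_regular A U \<and> nerode_regular A V"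
    using P(2) assms(2,3) unfolding img_def by auto
  ultimately show ?thesis unfolding recognizable_def using P(1) by blast
qed

lemma recognizable_conc_left:
  assumes "recognizable A R" "nerode_regular A U0"
  shows "recognizable A {(u @ s, t) | u s t. u \<in> U0 \<and> (s, t) \<in> R}"
proof -
  have "{(u @ s, t) | u s t. u \<in> U0 \<and> (s, t) \<in> R}
      = {(s', t'). \<exists>(s, t)\<in>R. (\<exists>u\<in>U0. s' = u @ s) \<and> t' = t}" by blast
  moreover have "{s'. \<exists>s\<in>U. \<exists>u\<in>U0. s' = u @ s} = conc U0 U" for U
    by (auto simp: conc_def)
  ultimately show ?thesis
    using recognizable_rel_image[OF assms(1)] nerode_regular_conc[OF assms(2)] by simp
qed

lemma recognizable_conc_right:
  assumes "recognizable A R" "nerode_regular A V0"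
  shows "recognizable A {(s, v @ t) | v s t. v \<in> V0 \<and> (s, t) \<in> R}"
proof -
  have "{(s, v @ t) | v s t. v \<in> V0 \<and> (s, t) \<in> R}
      = {(s', t'). \<exists>(s, t)\<in>R. s' = s \<and> (\<exists>v\<in>V0. t' = v @ t)}" by blast
  moreover have "{t'. \<exists>t\<in>V. \<exists>v\<in>V0. t' = v @ t} = conc V0 V" for V
    by (auto simp: conc_def)
  ultimately show ?thesis
    using recognizable_rel_image[OF assms(1)] nerode_regular_conc[OF assms(2)] by simp
qed

lemma nerode_regular_filter_pair_preimage:
  assumes "recognizable A R"
  shows "nerode_regular A {z \<in> lists A. (filter P1 z, filter P2 z) \<in> R}"
proof -
  obtain P where P: "finite P" "\<forall>(U, V)\<in>P. nerode_regular A U \<and> nerode_regular A V"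
    "R = (\<Union>(U, V)\<in>P. U \<times> V)"
    using assms unfolding recognizable_def by blast
  have "{z \<in> lists A. (filter P1 z, filter P2 z) \<in> R}
      = (\<Union>(U, V)\<in>P. {z \<in> lists A. filter P1 z \<in> U} \<inter> {z \<in> lists A. filter P2 z \<in> V})"
    unfolding P(3) by auto
  also have "nerode_regular A \<dots>"
    using P(1,2) by (intro nerode_regular_UN)
      (auto intro!: nerode_regular_Int nerode_regular_filter_preimage)
  finally show ?thesis .
qed

section \<open>Shifts, imbalance and lag\<close>

lemma shifts_subset: "shifts Sig w \<subseteq> {1..<length w}"
  unfolding shifts_def by auto

lemma finite_shifts [simp]: "finite (shifts Sig w)"
  by (rule finite_subset[OF shifts_subset]) simp

lemma shifts_append_left: "shifts Sig x \<subseteq> shifts Sig (x @ z)"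
proof
  fix s assume "s \<in> shifts Sig x"
  then have "1 \<le> s" "s < length x" "(x ! (s - 1) \<in> Sig) \<noteq> (x ! s \<in> Sig)"
    unfolding shifts_def by auto
  then show "s \<in> shifts Sig (x @ z)" unfolding shifts_def by (auto simp: nth_append)
qed

lemma shifts_append_right: "(\<lambda>s. s + length u) ` shifts Sig v \<subseteq> shifts Sig (u @ v)"
proof
  fix t assume "t \<in> (\<lambda>s. s + length u) ` shifts Sig v"
  then obtain s where s: "t = s + length u" "1 \<le> s" "s \<le> length v - 1"
    "(v ! (s - 1) \<in> Sig) \<noteq> (v ! s \<in> Sig)" unfolding shifts_def by auto
  then have "(u @ v) ! (t - 1) = v ! (s - 1)" "(u @ v) ! t = v ! s"
    by (auto simp: nth_append)
  with s show "t \<in> shifts Sig (u @ v)" unfolding shifts_def by auto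
qed

lemma shift_le_shift_append: "shift Sig v \<le> shift Sig (u @ v)"
proof -
  have "shift Sig v = card ((\<lambda>s. s + length u) ` shifts Sig v)"
    unfolding shift_def by (simp add: card_image)
  also have "\<dots> \<le> shift Sig (u @ v)"
    unfolding shift_def by (rule card_mono[OF finite_shifts shifts_append_right])
  finally show ?thesis .
qed

lemma shifts_Cons:
  "shifts Sig (a # v) = Suc ` shifts Sig v \<union> (if v \<noteq> [] \<and> (a \<in> Sig) \<noteq> (hd v \<in> Sig) then {1} else {})"
proof (intro set_eqI iffI)
  fix s assume s: "s \<in> shifts Sig (a # v)"
  show "s \<in> Suc ` shifts Sig v \<union> (if v \<noteq> [] \<and> (a \<in> Sig) \<noteq> (hd v \<in> Sig) then {1} else {})"
  proof (cases "s = 1")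
    case True
    then show ?thesis using s by (cases v) (auto simp: shifts_def)
  next
    case False
    with s obtain s' where "s = Suc s'" "s' \<ge> 1" unfolding shifts_def by (cases s) auto
    with s have "s' \<in> shifts Sig v" unfolding shifts_def by (cases s') auto
    then show ?thesis using \<open>s = Suc s'\<close> by blast
  qed
next
  fix s assume "s \<in> Suc ` shifts Sig v \<union> (if v \<noteq> [] \<and> (a \<in> Sig) \<noteq> (hd v \<in> Sig) then {1} else {})"
  then show "s \<in> shifts Sig (a # v)"
    unfolding shifts_def by (cases v) (auto split: if_splits)
qed

lemma shift_Cons:
  "shift Sig (a # v) = shift Sig v + (if v \<noteq> [] \<and> (a \<in> Sig) \<noteq> (hd v \<in> Sig) then 1 else 0)"
proof -
  have "1 \<notin> Suc ` shifts Sig v" using shifts_subset[of Sig v] by auto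
  moreover have "card (Suc ` shifts Sig v) = shift Sig v"
    unfolding shift_def by (simp add: card_image)
  ultimately show ?thesis unfolding shift_def shifts_Cons by auto
qed

lemma shift_eq_0_imp_uniform:
  "shift Sig z = 0 \<Longrightarrow> c \<in> set z \<Longrightarrow> (c \<in> Sig) = (hd z \<in> Sig)"
proof (induction z)
  case (Cons a z)
  then show ?case by (cases "z = []") (auto simp: shift_Cons split: if_splits)
qed simp

lemma shift_append_uniform_block:
  assumes "u \<noteq> []" "\<forall>c\<in>set u. (c \<in> Sig) = b" "z \<noteq> []" "(hd z \<in> Sig) \<noteq> b"
  shows "shift Sig (u @ z) = shift Sig z + 1"
  using assms by (induction u) (auto simp: shift_Cons hd_append)

lemma split_first_block:
  assumes "z \<in> lists (Sig \<union> Gam)" "\<not> (\<forall>c\<in>set z. (c \<in> Sig) = (hd z \<in> Sig))"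
  obtains u r where "z = u @ r" "u \<in> lists Sig \<or> u \<in> lists Gam" "shift Sig z = shift Sig r + 1"
proof -
  define b where "b = (hd z \<in> Sig)"
  define u where "u = takeWhile (\<lambda>c. (c \<in> Sig) = b) z"
  define r where "r = dropWhile (\<lambda>c. (c \<in> Sig) = b) z"
  have z: "z = u @ r" unfolding u_def r_def by simp
  have "z \<noteq> []" using assms(2) by auto
  then have "u \<noteq> []" unfolding u_def b_def by (cases z) auto
  have "r \<noteq> []" using assms(2) unfolding r_def b_def by (auto simp: dropWhile_eq_Nil_conv)
  have "(hd r \<in> Sig) \<noteq> b" using \<open>r \<noteq> []\<close> hd_dropWhile[of "\<lambda>c. (c \<in> Sig) = b" z]
    unfolding r_def by simp
  have u_uniform: "\<forall>c\<in>set u. (c \<in> Sig) = b" unfolding u_def by (auto dest: set_takeWhileD)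
  have "shift Sig z = shift Sig r + 1"
    unfolding z by (rule shift_append_uniform_block[OF \<open>u \<noteq> []\<close> u_uniform \<open>r \<noteq> []\<close>]) fact
  moreover have "u \<in> lists Sig \<or> u \<in> lists Gam"
    using u_uniform assms(1) z by (cases b) auto
  ultimately show thesis using that z by blast
qed

lemma proj_uniform:
  "Sig \<inter> Gam = {} \<Longrightarrow> u \<in> lists Sig \<Longrightarrow> proj_i Sig u = u \<and> proj_o Gam u = []"
  "Sig \<inter> Gam = {} \<Longrightarrow> u \<in> lists Gam \<Longrightarrow> proj_i Sig u = [] \<and> proj_o Gam u = u"
  by (auto simp: proj_i_def proj_o_def filter_empty_conv filter_id_conv)

lemma sem_append:
  "sem Sig Gam (u @ v) = (proj_i Sig u @ proj_i Sig v, proj_o Gam u @ proj_o Gam v)"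
  by (simp add: sem_def proj_i_def proj_o_def)

definition imbalance :: "'a set \<Rightarrow> 'a set \<Rightarrow> 'a list \<Rightarrow> int" where
  "imbalance Sig Gam u = int (length (proj_i Sig u)) - int (length (proj_o Gam u))"

lemma imbalance_Nil [simp]: "imbalance Sig Gam [] = 0"
  by (simp add: imbalance_def proj_i_def proj_o_def)

lemma imbalance_append [simp]:
  "imbalance Sig Gam (u @ v) = imbalance Sig Gam u + imbalance Sig Gam v"
  by (simp add: imbalance_def proj_i_def proj_o_def)

lemma imbalance_replicate:
  "imbalance Sig Gam (concat (replicate N c)) = int N * imbalance Sig Gam c"
  by (induction N) (auto simp: algebra_simps)

lemma abs_imbalance_le_length: "\<bar>imbalance Sig Gam u\<bar> \<le> int (length u)"
proof (induction u)
  case (Cons a u)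
  have "imbalance Sig Gam (a # u) = imbalance Sig Gam [a] + imbalance Sig Gam u"
    using imbalance_append[of Sig Gam "[a]" u] by simp
  moreover have "\<bar>imbalance Sig Gam [a]\<bar> \<le> 1"
    by (simp add: imbalance_def proj_i_def proj_o_def)
  ultimately show ?case using Cons by simp
qed simp

lemma abs_imbalance_uniform:
  assumes "Sig \<inter> Gam = {}" "u \<in> lists Sig \<or> u \<in> lists Gam"
  shows "\<bar>imbalance Sig Gam u\<bar> = int (length u)"
  using assms(2)
proof
  assume "u \<in> lists Sig"
  then show ?thesis using proj_uniform(1)[OF assms(1)] by (simp add: imbalance_def)
next
  assume "u \<in> lists Gam"
  then show ?thesis using proj_uniform(2)[OF assms(1)] by (simp add: imbalance_def)
qed

lemma lag_eq_abs_imbalance: "lag Sig Gam w i = nat \<bar>imbalance Sig Gam (take i w)\<bar>"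
  by (simp add: lag_def imbalance_def proj_i_def proj_o_def)

lemma length_eq_length_proj:
  "Sig \<inter> Gam = {} \<Longrightarrow> u \<in> lists (Sig \<union> Gam) \<Longrightarrow> length u = length (proj_i Sig u) + length (proj_o Gam u)"
  by (induction u) (auto simp: proj_i_def proj_o_def)

lemma abs_imbalance_take_Suc_le:
  "\<bar>imbalance Sig Gam (take (Suc k) x)\<bar> \<le> \<bar>imbalance Sig Gam (take k x)\<bar> + 1"
proof -
  have "take (Suc k) x = take k x @ take 1 (drop k x)" by (simp add: take_add[of k 1, simplified])
  moreover have "\<bar>imbalance Sig Gam (take 1 (drop k x))\<bar> \<le> 1"
    using abs_imbalance_le_length[of Sig Gam "take 1 (drop k x)"] by simp
  ultimately show ?thesis by simp
qed

text \<open>The shifts inside the window are consecutive among all shifts.\<close>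
lemma has_lagged_shifts_window:
  assumes "Y \<subseteq> shifts Sig w" "card Y \<ge> n" "\<forall>s\<in>Y. P < s \<and> s \<le> P'"
    "\<forall>p. P < p \<and> p \<le> P' \<longrightarrow> lag Sig Gam w p \<ge> n"
  shows "has_lagged_shifts Sig Gam w n"
proof (cases "n = 0")
  case True
  then show ?thesis unfolding has_lagged_shifts_def Let_def by (intro exI[of _ 0]) simp
next
  case False
  define S where "S = sorted_list_of_set (shifts Sig w)"
  have setS: "set S = shifts Sig w" unfolding S_def by simp
  have strict: "sorted_wrt (<) S" unfolding S_def by (rule strict_sorted_list_of_set)
  have mono: "S ! i \<le> S ! j" if "i \<le> j" "j < length S" for i j
    using that sorted_wrt_nth_less[OF strict] by (cases "i = j") (auto simp: less_imp_le)
  have "Y \<noteq> {}" using assms(2) False by auto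
  then obtain l0 where l0: "l0 < length S" "S ! l0 \<in> Y"
    using assms(1) setS by (metis ex_in_conv in_set_conv_nth subsetD)
  define j where "j = (LEAST l. l < length S \<and> P < S ! l)"
  have j: "j < length S" "P < S ! j" unfolding j_def
    by (rule LeastI2[of _ l0], use l0 assms(3) in auto)+
  have below_j: "\<not> (l < length S \<and> P < S ! l)" if "l < j" for l
    using not_less_Least[of l "\<lambda>l. l < length S \<and> P < S ! l"] that unfolding j_def by blast
  have in_window: "j + k < length S \<and> S ! (j + k) \<le> P'" if "k < n" for k
  proof (rule ccontr)
    assume out: "\<not> (j + k < length S \<and> S ! (j + k) \<le> P')"
    have Y: "Y \<subseteq> (\<lambda>l. S ! l) ` {j..<j + k}"
    proof
      fix x assume x: "x \<in> Y"
      then obtain l where l: "l < length S" "S ! l = x"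
        using assms(1) setS by (metis in_set_conv_nth subsetD)
      have "j \<le> l" using below_j[of l] l x assms(3) by force
      moreover have "l < j + k"
        using out mono[of "j + k" l] l x assms(3) by force
      ultimately show "x \<in> (\<lambda>l. S ! l) ` {j..<j + k}" using l by auto
    qed
    have "card Y \<le> card ((\<lambda>l. S ! l) ` {j..<j + k})" by (rule card_mono[OF _ Y]) simp
    also have "\<dots> \<le> card {j..<j + k}" by (rule card_image_le) simp
    finally show False using assms(2) that by simp
  qed
  have "j + n \<le> length S" using in_window[of "n - 1"] False by linarith
  moreover have "lag Sig Gam w (S ! (j + k)) \<ge> n" if "k < n" for k
    using in_window[OF that] mono[of j "j + k"] j assms(4) by fastforce
  ultimately show ?thesis unfolding has_lagged_shifts_def Let_def S_def[symmetric] by blast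
qed

lemma le_shiftlag:
  assumes "has_lagged_shifts Sig Gam w n"
  shows "n \<le> shiftlag Sig Gam w"
proof -
  have "{n. has_lagged_shifts Sig Gam w n} \<subseteq> {..length (sorted_list_of_set (shifts Sig w))}"
    unfolding has_lagged_shifts_def Let_def by auto
  then have "finite {n. has_lagged_shifts Sig Gam w n}" by (rule finite_subset) simp
  then show ?thesis unfolding shiftlag_def using assms by (simp add: Max_ge)
qed

lemma uniform_factor_if_no_shifts:
  assumes "\<forall>s. i < s \<and> s < j \<longrightarrow> s \<notin> shifts Sig x" "j \<le> length x" "c \<in> set (drop i (take j x))"
  shows "(c \<in> Sig) = (x ! i \<in> Sig)"
proof -
  have same: "(x ! l \<in> Sig) = (x ! i \<in> Sig)" if "i \<le> l" "l < j" for l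
    using that
  proof (induction l rule: dec_induct)
    case (step l)
    then have "Suc l \<notin> shifts Sig x" "Suc l \<le> length x - 1" using assms(1,2) by auto
    then show ?case using step by (simp add: shifts_def)
  qed simp
  from assms(3) obtain l where "l < length (drop i (take j x))" "drop i (take j x) ! l = c"
    by (metis in_set_conv_nth)
  then show ?thesis using same[of "i + l"] assms(2) by auto
qed

lemma shifts_in_suffix:
  assumes dense: "\<And>a. a + m \<le> length x \<Longrightarrow> \<exists>s\<in>shifts Sig x. a < s \<and> s < a + m"
    and "n * m \<le> length x"
  shows "\<exists>Y \<subseteq> shifts Sig x. card Y = n \<and> (\<forall>s\<in>Y. length x - n * m < s)"
  using assms(2)
proof (induction n)
  case 0
  show ?case by (intro exI[of _ "{}"]) simp
next
  case (Suc n)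
  have "n * m \<le> Suc n * m" by simp
  then have "n * m \<le> length x" using Suc.prems by linarith
  then obtain Y where Y: "Y \<subseteq> shifts Sig x" "card Y = n" "\<forall>s\<in>Y. length x - n * m < s"
    using Suc.IH by blast
  have window: "length x - Suc n * m + m = length x - n * m" using Suc.prems by simp
  have "length x - Suc n * m + m \<le> length x" unfolding window by simp
  then obtain s where s: "s \<in> shifts Sig x" "length x - Suc n * m < s" "s < length x - n * m"
    using dense[of "length x - Suc n * m"] unfolding window by blast
  have "s \<notin> Y" using Y(3) s(3) by auto
  moreover have "finite Y" by (rule finite_subset[OF Y(1)]) simp
  ultimately have "card (insert s Y) = Suc n" using Y(2) by simp
  moreover have "length x - Suc n * m \<le> length x - n * m" by (simp add: diff_le_mono2)
  then have "\<forall>t\<in>insert s Y. length x - Suc n * m < t" using Y(3) s(2) by auto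
  moreover have "insert s Y \<subseteq> shifts Sig x" using Y(1) s(1) by blast
  ultimately show ?case by blast
qed

section \<open>Buffers of letters read ahead\<close>

text \<open>Two buffers holding the unmatched letters of two readers of the same word: after
  appending \<open>b\<close> and \<open>b'\<close>, the common part \<open>r\<close> is matched and at most one buffer stays nonempty.\<close>
definition buffer_step :: "'a list \<Rightarrow> 'a list \<Rightarrow> 'a list \<Rightarrow> 'a list \<Rightarrow> 'a list \<Rightarrow> 'a list \<Rightarrow> bool" where
  "buffer_step e e' b b' n n' \<longleftrightarrow> (\<exists>r. e @ b = r @ n \<and> e' @ b' = r @ n') \<and> (n = [] \<or> n' = [])"

lemma drop_take_append_drop_take:
  assumes "a \<le> b" "b \<le> c" "c \<le> length V"
  shows "drop a (take b V) @ drop b (take c V) = drop a (take c V)"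
proof -
  have "take b (take c V) = take b V" using assms(2) by (simp add: min_def)
  then have "take c V = take b V @ drop b (take c V)" by (metis append_take_drop_id)
  then have "drop a (take c V) = drop a (take b V @ drop b (take c V))" by simp
  also have "\<dots> = drop a (take b V) @ drop b (take c V)" using assms by simp
  finally show ?thesis by simp
qed

lemma buffer_step_take:
  assumes "al \<le> al1" "be \<le> be1" "al1 \<le> length V" "be1 \<le> length V"
  shows "buffer_step (drop be (take al V)) (drop al (take be V)) (drop al (take al1 V))
    (drop be (take be1 V)) (drop be1 (take al1 V)) (drop al1 (take be1 V))"
proof -
  note split = drop_take_append_drop_take[where V = V]
  consider "be \<le> al" "be1 \<le> al1" | "be \<le> al" "al1 < be1" | "al < be" "be1 \<le> al1" | "al < be" "al1 < be1"
    by linarith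
  then show ?thesis
  proof cases
    case 1
    then show ?thesis unfolding buffer_step_def using assms split[of be al al1] split[of be be1 al1]
      by (intro conjI exI[of _ "drop be (take be1 V)"]) simp_all
  next
    case 2
    then show ?thesis unfolding buffer_step_def using assms split[of be al al1] split[of be al1 be1]
      by (intro conjI exI[of _ "drop be (take al1 V)"]) simp_all
  next
    case 3
    then show ?thesis unfolding buffer_step_def using assms split[of al be be1] split[of al be1 al1]
      by (intro conjI exI[of _ "drop al (take be1 V)"]) simp_all
  next
    case 4
    then show ?thesis unfolding buffer_step_def using assms split[of al be be1] split[of al al1 be1]
      by (intro conjI exI[of _ "drop al (take al1 V)"]) simp_all
  qed
qed

text \<open>The \<open>P\<close>-letters read by \<open>x\<close> but not yet by \<open>y\<close>, when both read the same \<open>P\<close>-projection.\<close>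
definition ahead :: "('a \<Rightarrow> bool) \<Rightarrow> 'a list \<Rightarrow> 'a list \<Rightarrow> 'a list" where
  "ahead P x y = drop (length (filter P y)) (filter P x)"

lemma filter_take_eq_take_filter:
  "filter P (take k w) = take (length (filter P (take k w))) (filter P w)"
proof -
  have "filter P (take k w) @ filter P (drop k w) = filter P w"
    by (metis append_take_drop_id filter_append)
  then show ?thesis by (metis append_eq_conv_conj)
qed

lemma buffer_step_ahead:
  assumes "filter P w = filter P w'" "j < length w" "j < length w'"
  shows "buffer_step (ahead P (take j w) (take j w')) (ahead P (take j w') (take j w))
    (filter P [w ! j]) (filter P [w' ! j])
    (ahead P (take (Suc j) w) (take (Suc j) w')) (ahead P (take (Suc j) w') (take (Suc j) w))"
proof -
  define V where "V = filter P w"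
  define al where "al k = length (filter P (take k w))" for k
  define be where "be k = length (filter P (take k w'))" for k
  have tw: "filter P (take k w) = take (al k) V" and tw': "filter P (take k w') = take (be k) V" for k
    unfolding al_def be_def V_def using filter_take_eq_take_filter assms(1) by metis+
  have le: "al k \<le> length V" "be k \<le> length V" for k
    using tw[of k] tw'[of k] unfolding al_def be_def by (metis length_take min.bounded_iff order_refl)+
  have Suc: "take (Suc j) w = take j w @ [w ! j]" "take (Suc j) w' = take j w' @ [w' ! j]"
    using assms(2,3) by (simp_all add: take_Suc_conv_app_nth)
  have letter: "filter P [w ! j] = drop (al j) (take (al (Suc j)) V)"
    "filter P [w' ! j] = drop (be j) (take (be (Suc j)) V)"
    using tw[of "Suc j"] tw[of j] tw'[of "Suc j"] tw'[of j] le unfolding Suc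
    by (metis append_eq_conv_conj filter_append length_take min.absorb2)+
  have mono: "al j \<le> al (Suc j)" "be j \<le> be (Suc j)"
    unfolding al_def be_def Suc by simp_all
  show ?thesis
    unfolding ahead_def tw tw' letter
    using buffer_step_take[OF mono le(1)[of "Suc j"] le(2)[of "Suc j"]] unfolding al_def be_def
    by (simp add: tw tw' length_take min.absorb2 le)
qed

lemma drop_length_append_swap:
  assumes "u @ s = u' @ s'"
  shows "drop (length u) u' @ s' = drop (length u') u @ s"
proof -
  obtain us where "u = u' @ us \<and> us @ s = s' \<or> u @ us = u' \<and> s = us @ s'"
    using assms by (auto simp: append_eq_append_conv2)
  then show ?thesis by auto
qed

lemma ahead_append_swap:
  "filter P x @ filter P z = filter P x' @ filter P z' \<Longrightarrow>
    ahead P x' x @ filter P z' = ahead P x x' @ filter P z"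
  unfolding ahead_def by (rule drop_length_append_swap)

lemma two_length_ahead_le:
  assumes "Sig \<inter> Gam = {}" "x \<in> lists (Sig \<union> Gam)" "y \<in> lists (Sig \<union> Gam)" "length x = length y"
  shows "2 * int (length (ahead (\<lambda>l. l \<in> Sig) x y)) \<le> \<bar>imbalance Sig Gam x\<bar> + \<bar>imbalance Sig Gam y\<bar>"
    and "2 * int (length (ahead (\<lambda>l. l \<in> Gam) x y)) \<le> \<bar>imbalance Sig Gam x\<bar> + \<bar>imbalance Sig Gam y\<bar>"
  using length_eq_length_proj[OF assms(1,2)] length_eq_length_proj[OF assms(1,3)] assms(4)
  by (simp_all add: ahead_def imbalance_def proj_i_def proj_o_def of_nat_diff)

lemma buffer_step_append:
  assumes "buffer_step a b u u' a2 b2" "\<exists>r. a2 @ v = r @ A \<and> b2 @ v' = r @ B"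
  shows "\<exists>r. a @ u @ v = r @ A \<and> b @ u' @ v' = r @ B"
proof -
  obtain r1 r2 where "a @ u = r1 @ a2" "b @ u' = r1 @ b2" "a2 @ v = r2 @ A" "b2 @ v' = r2 @ B"
    using assms unfolding buffer_step_def by blast
  then show ?thesis by (intro exI[of _ "r1 @ r2"]) (metis append.assoc)
qed

section \<open>Residuals of a DFA whose language has bounded shiftlag\<close>

lemma foldl_concat_replicate: "foldl \<delta> p c = p \<Longrightarrow> foldl \<delta> p (concat (replicate M c)) = p"
  by (induction M) auto

locale shiftlag_bounded_dfa =
  fixes Sig Gam :: "'a set" and Q :: "nat set" and q0 :: nat and \<delta> :: "nat \<Rightarrow> 'a \<Rightarrow> nat"
    and F :: "nat set" and K :: nat
  assumes finite_Sig: "finite Sig" and finite_Gam: "finite Gam" and disjoint: "Sig \<inter> Gam = {}"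
    and finite_Q: "finite Q" and q0_in_Q: "q0 \<in> Q" and delta_closed: "\<forall>q\<in>Q. \<forall>a\<in>Sig \<union> Gam. \<delta> q a \<in> Q"
    and F_subset_Q: "F \<subseteq> Q"
    and shiftlag_le: "\<And>w. w \<in> lists (Sig \<union> Gam) \<Longrightarrow> foldl \<delta> q0 w \<in> F \<Longrightarrow> shiftlag Sig Gam w \<le> K"

begin

abbreviation Alph :: "'a set" where
  "Alph \<equiv> Sig \<union> Gam"

definition residual :: "nat \<Rightarrow> 'a list set" where
  "residual q = {z \<in> lists Alph. foldl \<delta> q z \<in> F}"

definition fs_states :: "nat set" where
  "fs_states = {q \<in> Q. finite_shift Sig (residual q)}"

lemma foldl_in_Q: "q \<in> Q \<Longrightarrow> x \<in> lists Alph \<Longrightarrow> foldl \<delta> q x \<in> Q"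
  using foldl_in_closed[OF delta_closed] by blast

lemma lquot_residual: "x \<in> lists Alph \<Longrightarrow> lquot x (residual q) = residual (foldl \<delta> q x)"
  unfolding lquot_def residual_def by auto

lemma residual_append_iff:
  "x \<in> lists Alph \<Longrightarrow> x @ z \<in> residual q \<longleftrightarrow> z \<in> residual (foldl \<delta> q x)"
  using lquot_residual[of x q] unfolding lquot_def by blast

lemma nerode_regular_residual: "q \<in> Q \<Longrightarrow> nerode_regular Alph (residual q)"
  unfolding residual_def using nerode_regular_dfa[OF finite_Q delta_closed] by blast

lemma RegFS_lquot_iff:
  assumes "x \<in> lists Alph"
  shows "RegFS Sig Gam (lquot x (residual q0)) \<longleftrightarrow> foldl \<delta> q0 x \<in> fs_states"
proof -
  have "regular_lang Alph (residual q)" if "q \<in> Q" for q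
    unfolding regular_lang_def residual_def using that finite_Q delta_closed F_subset_Q by blast
  then show ?thesis
    unfolding RegFS_def fs_states_def lquot_residual[OF assms]
    using foldl_in_Q[OF q0_in_Q assms] by blast
qed

lemma foldl_in_fs_states:
  assumes "p \<in> fs_states" "y \<in> lists Alph"
  shows "foldl \<delta> p y \<in> fs_states"
proof -
  obtain M where "p \<in> Q" and M: "\<And>z. z \<in> residual p \<Longrightarrow> shift Sig z \<le> M"
    using assms(1) by (auto simp: fs_states_def finite_shift_def bdd_above_def)
  have "shift Sig z \<le> M" if "z \<in> residual (foldl \<delta> p y)" for z
    using M[of "y @ z"] shift_le_shift_append[of Sig z y] that residual_append_iff[OF assms(2)]
    by simp
  then show ?thesis using foldl_in_Q[OF \<open>p \<in> Q\<close> assms(2)]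
    by (auto simp: fs_states_def finite_shift_def bdd_above_def)
qed

lemma fs_states_take_mono:
  assumes "x \<in> lists Alph" "j \<le> i" "foldl \<delta> q0 (take j x) \<in> fs_states"
  shows "foldl \<delta> q0 (take i x) \<in> fs_states"
proof -
  have "take i x = take j x @ drop j (take i x)"
    using assms(2) by (metis append_take_drop_id min.absorb1 take_take)
  moreover have "drop j (take i x) \<in> lists Alph"
    using assms(1) by (auto dest: in_set_dropD in_set_takeD)
  ultimately show ?thesis using foldl_in_fs_states[OF assms(3)] by (metis foldl_append)
qed

lemma unbounded_shift_residual:
  assumes "q \<in> Q" "q \<notin> fs_states"
  obtains z where "z \<in> residual q" "N \<le> shift Sig z"
proof -
  have "\<not> bdd_above (shift Sig ` residual q)"
    using assms by (auto simp: fs_states_def finite_shift_def)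
  then have "\<exists>z\<in>residual q. N < shift Sig z" by (auto simp: bdd_above_def not_le)
  then show ?thesis using that by force
qed

lemma no_lagged_window:
  assumes "W \<in> residual q0" "Y \<subseteq> shifts Sig W" "K + 1 \<le> card Y" "\<forall>s\<in>Y. P < s \<and> s \<le> P'"
    "\<forall>p. P < p \<and> p \<le> P' \<longrightarrow> K + 1 \<le> lag Sig Gam W p"
  shows False
proof -
  have "K + 1 \<le> shiftlag Sig Gam W"
    by (rule le_shiftlag[OF has_lagged_shifts_window[OF assms(2-5)]])
  moreover have "shiftlag Sig Gam W \<le> K" using assms(1) shiftlag_le by (auto simp: residual_def)
  ultimately show False by simp
qed

text \<open>Otherwise all \<open>K + 1\<close> shifts of \<open>z\<close> are lagged by more than \<open>K\<close> in \<open>x @ z\<close>.\<close>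
lemma abs_imbalance_before_shifts:
  assumes "x \<in> lists Alph" "z \<in> residual (foldl \<delta> q0 x)" "K + 1 \<le> shift Sig z"
  shows "\<bar>imbalance Sig Gam x\<bar> \<le> int (length z + K)"
proof (rule ccontr)
  assume big: "\<not> ?thesis"
  show False
  proof (rule no_lagged_window)
    show "x @ z \<in> residual q0" using assms(1,2) residual_append_iff by blast
    show "(\<lambda>s. s + length x) ` shifts Sig z \<subseteq> shifts Sig (x @ z)" by (rule shifts_append_right)
    show "K + 1 \<le> card ((\<lambda>s. s + length x) ` shifts Sig z)"
      using assms(3) by (simp add: card_image shift_def)
    show "\<forall>s\<in>(\<lambda>s. s + length x) ` shifts Sig z. length x < s \<and> s \<le> length (x @ z)"
      using shifts_subset[of Sig z] by force
    show "\<forall>p. length x < p \<and> p \<le> length (x @ z) \<longrightarrow> K + 1 \<le> lag Sig Gam (x @ z) p"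
    proof (intro allI impI)
      fix p assume "length x < p \<and> p \<le> length (x @ z)"
      then have "take p (x @ z) = x @ take (p - length x) z" by simp
      moreover have "\<bar>imbalance Sig Gam (take (p - length x) z)\<bar> \<le> int (length z)"
        using abs_imbalance_le_length[of Sig Gam "take (p - length x) z"] by simp
      ultimately show "K + 1 \<le> lag Sig Gam (x @ z) p"
        using big by (simp add: lag_eq_abs_imbalance)
    qed
  qed
qed

lemma state_repeats_in_factor:
  assumes "x \<in> lists Alph" "a + card Q \<le> length x"
  obtains i j where "a \<le> i" "i < j" "j \<le> a + card Q" "foldl \<delta> q0 (take i x) = foldl \<delta> q0 (take j x)"
proof -
  define f where "f k = foldl \<delta> q0 (take (a + k) x)" for k
  have "f ` {0..card Q} \<subseteq> Q"
    unfolding f_def using foldl_in_Q[OF q0_in_Q] assms(1) by (auto dest: in_set_takeD)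
  then have "card (f ` {0..card Q}) < card {0..card Q}"
    using card_mono[OF finite_Q] by (simp add: le_imp_less_Suc)
  then have "\<not> inj_on f {0..card Q}" by (rule pigeonhole)
  then obtain k1 k2 where k: "k1 \<le> card Q" "k2 \<le> card Q" "k1 \<noteq> k2" "f k1 = f k2"
    unfolding inj_on_def by auto
  show thesis
  proof (cases "k1 < k2")
    case True
    then show thesis using that[of "a + k1" "a + k2"] k unfolding f_def by simp
  next
    case False
    then show thesis using that[of "a + k2" "a + k1"] k unfolding f_def by simp
  qed
qed

lemma pump_uniform_loop:
  assumes "x1 \<in> lists Alph" "x2 \<in> lists Alph" "c \<noteq> []" "c \<in> lists Sig \<or> c \<in> lists Gam"
    "foldl \<delta> (foldl \<delta> q0 x1) c = foldl \<delta> q0 x1"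
  obtains x' where "x' \<in> lists Alph" "foldl \<delta> q0 x' = foldl \<delta> q0 (x1 @ c @ x2)"
    "int N \<le> \<bar>imbalance Sig Gam x'\<bar>"
proof -
  define M where "M = N + length x1 + length x2"
  define x' where "x' = x1 @ concat (replicate M c) @ x2"
  have "c \<in> lists Alph" using assms(4) by auto
  then have "concat (replicate M c) \<in> lists Alph" by (induction M) auto
  then have "x' \<in> lists Alph" unfolding x'_def using assms(1,2) by simp
  moreover have "foldl \<delta> q0 x' = foldl \<delta> q0 (x1 @ c @ x2)"
    unfolding x'_def using foldl_concat_replicate[OF assms(5)] assms(5) by simp
  moreover have "int N \<le> \<bar>imbalance Sig Gam x'\<bar>"
  proof -
    have "1 \<le> \<bar>imbalance Sig Gam c\<bar>"
      using abs_imbalance_uniform[OF disjoint assms(4)] assms(3) by (cases c) auto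
    then have "int M \<le> int M * \<bar>imbalance Sig Gam c\<bar>"
      by (metis mult.right_neutral mult_left_mono of_nat_0_le_iff)
    moreover have "\<bar>imbalance Sig Gam x1\<bar> \<le> int (length x1)" "\<bar>imbalance Sig Gam x2\<bar> \<le> int (length x2)"
      by (rule abs_imbalance_le_length)+
    ultimately show ?thesis
      unfolding x'_def M_def by (simp add: imbalance_replicate abs_mult)
  qed
  ultimately show thesis by (rule that)
qed

text \<open>A shift-free factor of length \<open>card Q\<close> contains a loop reading letters of one kind only;
  pumping it would produce a lag that no continuation with \<open>K + 1\<close> shifts could repair.\<close>
lemma shift_in_every_window:
  assumes x: "x \<in> lists Alph" and q: "foldl \<delta> q0 x \<notin> fs_states" and a: "a + card Q \<le> length x"
  shows "\<exists>s\<in>shifts Sig x. a < s \<and> s < a + card Q"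
proof (rule ccontr)
  assume "\<not> ?thesis"
  then have no_shift: "\<forall>s. a < s \<and> s < a + card Q \<longrightarrow> s \<notin> shifts Sig x" by blast
  obtain i j where ij: "a \<le> i" "i < j" "j \<le> a + card Q"
    "foldl \<delta> q0 (take i x) = foldl \<delta> q0 (take j x)"
    using state_repeats_in_factor[OF x a] by blast
  define c where "c = drop i (take j x)"
  have "take i (take j x) = take i x" using ij(2) by (simp add: min_def)
  then have split1: "take j x = take i x @ c" unfolding c_def by (metis append_take_drop_id)
  then have split2: "x = take i x @ c @ drop j x" by (metis append.assoc append_take_drop_id)
  have "c \<noteq> []" unfolding c_def using ij(2,3) a by simp
  have uniform: "(e \<in> Sig) = (x ! i \<in> Sig)" if "e \<in> set c" for e
    using uniform_factor_if_no_shifts[of i j Sig x e] no_shift a ij that unfolding c_def by auto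
  have "c \<in> lists Alph" using x unfolding c_def by (auto dest: in_set_takeD in_set_dropD)
  with uniform have "c \<in> lists Sig \<or> c \<in> lists Gam" by blast
  obtain z where z: "z \<in> residual (foldl \<delta> q0 x)" "K + 1 \<le> shift Sig z"
    using unbounded_shift_residual[OF foldl_in_Q[OF q0_in_Q x] q] by blast
  have loop: "foldl \<delta> (foldl \<delta> q0 (take i x)) c = foldl \<delta> q0 (take i x)"
    using ij(4) split1 by simp
  have "take i x \<in> lists Alph" "drop j x \<in> lists Alph"
    using x by (auto dest: in_set_takeD in_set_dropD)
  from pump_uniform_loop[OF this \<open>c \<noteq> []\<close> \<open>c \<in> lists Sig \<or> c \<in> lists Gam\<close> loop]
  obtain x' where "x' \<in> lists Alph" "foldl \<delta> q0 x' = foldl \<delta> q0 x"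
    "int (length z + K + 1) \<le> \<bar>imbalance Sig Gam x'\<bar>"
    using split2 by metis
  with abs_imbalance_before_shifts[of x' z] z show False by simp
qed

definition lag_limit :: nat where
  "lag_limit = (K + 1) * card Q + K"

text \<open>Since every window of length \<open>card Q\<close> contains a shift, the last \<open>(K + 1) * card Q\<close>
  positions contain \<open>K + 1\<close> shifts, and these would all be lagged by more than \<open>K\<close> if the
  imbalance exceeded \<open>lag_limit\<close>.\<close>
lemma abs_imbalance_le_lag_limit:
  assumes x: "x \<in> lists Alph" and q: "foldl \<delta> q0 x \<notin> fs_states"
  shows "\<bar>imbalance Sig Gam x\<bar> \<le> int lag_limit"
proof (cases "(K + 1) * card Q \<le> length x")
  case True
  let ?P = "length x - (K + 1) * card Q"
  obtain Y where Y: "Y \<subseteq> shifts Sig x" "card Y = K + 1" "\<forall>s\<in>Y. ?P < s"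
    using shifts_in_suffix[OF shift_in_every_window[OF x q] True] by blast
  obtain z where z: "z \<in> residual (foldl \<delta> q0 x)"
    using unbounded_shift_residual[OF foldl_in_Q[OF q0_in_Q x] q] by blast
  show ?thesis
  proof (rule ccontr)
    assume big: "\<not> ?thesis"
    show False
    proof (rule no_lagged_window)
      show "x @ z \<in> residual q0" using x z residual_append_iff by blast
      show "Y \<subseteq> shifts Sig (x @ z)" using Y(1) shifts_append_left by blast
      show "\<forall>s\<in>Y. ?P < s \<and> s \<le> length x"
        using Y(1,3) shifts_subset[of Sig x] by fastforce
      show "\<forall>p. ?P < p \<and> p \<le> length x \<longrightarrow> K + 1 \<le> lag Sig Gam (x @ z) p"
      proof (intro allI impI)
        fix p assume p: "?P < p \<and> p \<le> length x"
        have "imbalance Sig Gam x = imbalance Sig Gam (take p x) + imbalance Sig Gam (drop p x)"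
          by (metis append_take_drop_id imbalance_append)
        moreover have "length (drop p x) \<le> (K + 1) * card Q" using p by (simp only: length_drop) linarith
        then have "\<bar>imbalance Sig Gam (drop p x)\<bar> \<le> int ((K + 1) * card Q)"
          using abs_imbalance_le_length[of Sig Gam "drop p x"] by linarith
        ultimately show "K + 1 \<le> lag Sig Gam (x @ z) p"
          using big p by (simp add: lag_eq_abs_imbalance lag_limit_def)
      qed
    qed (use Y(2) in simp)
  qed
next
  case False
  then have "length x \<le> lag_limit" by (simp add: lag_limit_def)
  then show ?thesis using abs_imbalance_le_length[of Sig Gam x] by linarith
qed

lemma abs_imbalance_take_le_Suc_lag_limit:
  assumes "x \<in> lists Alph" "\<And>k. k < j \<Longrightarrow> foldl \<delta> q0 (take k x) \<notin> fs_states"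
  shows "\<bar>imbalance Sig Gam (take j x)\<bar> \<le> int lag_limit + 1"
proof (cases j)
  case (Suc k)
  have "take k x \<in> lists Alph" using assms(1) by (auto dest: in_set_takeD)
  then have "\<bar>imbalance Sig Gam (take k x)\<bar> \<le> int lag_limit"
    using abs_imbalance_le_lag_limit assms(2)[of k] Suc by simp
  then show ?thesis using abs_imbalance_take_Suc_le[of Sig Gam k x] Suc by simp
qed simp
text \<open>Pairs of projections of accepted words with at most \<open>n\<close> shifts, built by prepending
  maximal one-sided blocks.\<close>
primrec proj_blocks :: "nat \<Rightarrow> nat \<Rightarrow> ('a list \<times> 'a list) set" where
  "proj_blocks 0 q = {(u, []) | u. u \<in> lists Sig \<and> foldl \<delta> q u \<in> F}
     \<union> {([], v) | v. v \<in> lists Gam \<and> foldl \<delta> q v \<in> F}"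
| "proj_blocks (Suc n) q = proj_blocks n q \<union> (\<Union>p\<in>Q.
     {(u @ s, t) | u s t. u \<in> lists Sig \<and> foldl \<delta> q u = p \<and> (s, t) \<in> proj_blocks n p}
   \<union> {(s, v @ t) | v s t. v \<in> lists Gam \<and> foldl \<delta> q v = p \<and> (s, t) \<in> proj_blocks n p})"

lemma nerode_regular_dfa_lists:
  assumes "q \<in> Q" "X \<subseteq> Alph"
  shows "nerode_regular Alph {u \<in> lists X. foldl \<delta> q u \<in> P}"
proof -
  have "{u \<in> lists X. foldl \<delta> q u \<in> P} = lists X \<inter> {u \<in> lists Alph. foldl \<delta> q u \<in> P}"
    using assms(2) by auto
  then show ?thesis
    using nerode_regular_Int[OF nerode_regular_lists[OF assms(2)]
        nerode_regular_dfa[OF finite_Q delta_closed assms(1)]] by simp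
qed

lemma recognizable_proj_blocks: "q \<in> Q \<Longrightarrow> recognizable Alph (proj_blocks n q)"
proof (induction n arbitrary: q)
  case 0
  have "proj_blocks 0 q = {u \<in> lists Sig. foldl \<delta> q u \<in> F} \<times> {[]} \<union> {[]} \<times> {v \<in> lists Gam. foldl \<delta> q v \<in> F}"
    by auto
  then show ?case using 0
    by (auto intro!: recognizable_Un recognizable_Times nerode_regular_dfa_lists nerode_regular_singleton)
next
  case (Suc n)
  have step: "recognizable Alph
     ({(u @ s, t) | u s t. u \<in> lists Sig \<and> foldl \<delta> q u = p \<and> (s, t) \<in> proj_blocks n p}
    \<union> {(s, v @ t) | v s t. v \<in> lists Gam \<and> foldl \<delta> q v = p \<and> (s, t) \<in> proj_blocks n p})"
    if "p \<in> Q" for p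
    using recognizable_conc_left[OF Suc.IH[OF that] nerode_regular_dfa_lists[OF Suc.prems, of Sig "{p}"]]
      recognizable_conc_right[OF Suc.IH[OF that] nerode_regular_dfa_lists[OF Suc.prems, of Gam "{p}"]]
    by (simp add: recognizable_Un)
  show ?case unfolding proj_blocks.simps
    by (rule recognizable_Un[OF Suc.IH[OF Suc.prems] recognizable_UN[OF finite_Q step]])
qed

lemma proj_blocks_sound:
  "q \<in> Q \<Longrightarrow> st \<in> proj_blocks n q \<Longrightarrow> st \<in> sem Sig Gam ` residual q"
proof (induction n arbitrary: q st)
  case 0
  then obtain u where u: "u \<in> lists Sig \<and> st = (u, []) \<or> u \<in> lists Gam \<and> st = ([], u)"
    and "foldl \<delta> q u \<in> F" by auto
  then have "u \<in> residual q" by (auto simp: residual_def)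
  moreover have "sem Sig Gam u = st" using u proj_uniform[OF disjoint, of u] by (auto simp: sem_def)
  ultimately show ?case by blast
next
  case (Suc n)
  show ?case
  proof (cases "st \<in> proj_blocks n q")
    case False
    have "st \<in> proj_blocks n q \<union> (\<Union>p\<in>Q.
        {(u @ s, t) | u s t. u \<in> lists Sig \<and> foldl \<delta> q u = p \<and> (s, t) \<in> proj_blocks n p}
      \<union> {(s, v @ t) | v s t. v \<in> lists Gam \<and> foldl \<delta> q v = p \<and> (s, t) \<in> proj_blocks n p})"
      using Suc.prems(2) by (simp only: proj_blocks.simps)
    then obtain p where "p \<in> Q" and
      "st \<in> {(u @ s, t) | u s t. u \<in> lists Sig \<and> foldl \<delta> q u = p \<and> (s, t) \<in> proj_blocks n p}
        \<union> {(s, v @ t) | v s t. v \<in> lists Gam \<and> foldl \<delta> q v = p \<and> (s, t) \<in> proj_blocks n p}"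
      using False by blast
    then obtain s t u where st: "(s, t) \<in> proj_blocks n p" "foldl \<delta> q u = p"
      and u: "u \<in> lists Sig \<and> st = (u @ s, t) \<or> u \<in> lists Gam \<and> st = (s, u @ t)"
      by blast
    obtain z where z: "z \<in> residual p" "sem Sig Gam z = (s, t)"
      using Suc.IH[OF \<open>p \<in> Q\<close> st(1)] by (metis imageE)
    have "u \<in> lists Alph" using u by auto
    then have "u @ z \<in> residual q" using residual_append_iff st(2) z(1) by blast
    moreover have "sem Sig Gam (u @ z) = st"
      using u z(2) proj_uniform[OF disjoint, of u] unfolding sem_append by (auto simp: sem_def)
    ultimately show ?thesis by (metis image_eqI)
  qed (use Suc in blast)
qed

lemma proj_blocks_mono: "m \<le> n \<Longrightarrow> proj_blocks m q \<subseteq> proj_blocks n q"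
  by (rule lift_Suc_mono_le[of "\<lambda>n. proj_blocks n q"]) auto

lemma proj_blocks_Suc_Sig:
  assumes "p \<in> Q" "u \<in> lists Sig" "foldl \<delta> q u = p" "(s, t) \<in> proj_blocks n p"
  shows "(u @ s, t) \<in> proj_blocks (Suc n) q"
proof -
  have "(u @ s, t) \<in>
      {(u @ s, t) | u s t. u \<in> lists Sig \<and> foldl \<delta> q u = p \<and> (s, t) \<in> proj_blocks n p}"
    using assms(2-4) by blast
  then show ?thesis unfolding proj_blocks.simps by (intro UnI2 UN_I[OF assms(1)] UnI1)
qed

lemma proj_blocks_Suc_Gam:
  assumes "p \<in> Q" "v \<in> lists Gam" "foldl \<delta> q v = p" "(s, t) \<in> proj_blocks n p"
  shows "(s, v @ t) \<in> proj_blocks (Suc n) q"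
proof -
  have "(s, v @ t) \<in>
      {(s, v @ t) | v s t. v \<in> lists Gam \<and> foldl \<delta> q v = p \<and> (s, t) \<in> proj_blocks n p}"
    using assms(2-4) by blast
  then show ?thesis unfolding proj_blocks.simps by (intro UnI2 UN_I[OF assms(1)] UnI2)
qed

lemma uniform_in_proj_blocks_0:
  assumes "z \<in> residual q" "\<forall>c\<in>set z. (c \<in> Sig) = (hd z \<in> Sig)"
  shows "sem Sig Gam z \<in> proj_blocks 0 q"
proof -
  have "foldl \<delta> q z \<in> F" using assms(1) by (simp add: residual_def)
  moreover have "z \<in> lists Sig \<or> z \<in> lists Gam"
    using assms by (cases "hd z \<in> Sig") (auto simp: residual_def)
  ultimately show ?thesis
  proof (elim disjE)
    assume "z \<in> lists Sig"
    then have "sem Sig Gam z = (z, [])" using proj_uniform(1)[OF disjoint] by (simp add: sem_def)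
    with \<open>z \<in> lists Sig\<close> \<open>foldl \<delta> q z \<in> F\<close> show ?thesis by simp
  next
    assume "z \<in> lists Gam"
    then have "sem Sig Gam z = ([], z)" using proj_uniform(2)[OF disjoint] by (simp add: sem_def)
    with \<open>z \<in> lists Gam\<close> \<open>foldl \<delta> q z \<in> F\<close> show ?thesis by simp
  qed
qed

lemma proj_blocks_complete:
  "z \<in> residual q \<Longrightarrow> q \<in> Q \<Longrightarrow> shift Sig z \<le> n \<Longrightarrow> sem Sig Gam z \<in> proj_blocks n q"
proof (induction n arbitrary: q z)
  case 0
  then show ?case by (intro uniform_in_proj_blocks_0 ballI shift_eq_0_imp_uniform) simp_all
next
  case (Suc n)
  show ?case
  proof (cases "\<forall>c\<in>set z. (c \<in> Sig) = (hd z \<in> Sig)")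
    case True
    show ?thesis
      by (rule subsetD[OF proj_blocks_mono uniform_in_proj_blocks_0[OF Suc.prems(1) True]]) simp
  next
    case False
    have zA: "z \<in> lists Alph" using Suc.prems(1) by (simp add: residual_def)
    obtain u r where z: "z = u @ r" and u: "u \<in> lists Sig \<or> u \<in> lists Gam"
      and shift: "shift Sig z = shift Sig r + 1"
      using split_first_block[OF zA False] by blast
    have uA: "u \<in> lists Alph" using zA z by simp
    define p where "p = foldl \<delta> q u"
    have "p \<in> Q" unfolding p_def using foldl_in_Q Suc.prems(2) uA by blast
    have "r \<in> residual p" using Suc.prems(1) residual_append_iff[OF uA] unfolding z p_def by blast
    then have IH: "(proj_i Sig r, proj_o Gam r) \<in> proj_blocks n p"
      using Suc.IH \<open>p \<in> Q\<close> shift Suc.prems(3) by (simp add: sem_def)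
    from u show ?thesis
    proof (elim disjE)
      assume "u \<in> lists Sig"
      then have "sem Sig Gam z = (u @ proj_i Sig r, proj_o Gam r)"
        using proj_uniform(1)[OF disjoint \<open>u \<in> lists Sig\<close>] unfolding z sem_append by simp
      then show ?thesis
        using proj_blocks_Suc_Sig[OF \<open>p \<in> Q\<close> \<open>u \<in> lists Sig\<close> p_def[symmetric] IH] by simp
    next
      assume "u \<in> lists Gam"
      then have "sem Sig Gam z = (proj_i Sig r, u @ proj_o Gam r)"
        using proj_uniform(2)[OF disjoint \<open>u \<in> lists Gam\<close>] unfolding z sem_append by simp
      then show ?thesis
        using proj_blocks_Suc_Gam[OF \<open>p \<in> Q\<close> \<open>u \<in> lists Gam\<close> p_def[symmetric] IH] by simp
    qed
  qed
qed

lemma recognizable_sem_residual: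
  assumes "q \<in> fs_states"
  shows "recognizable Alph (sem Sig Gam ` residual q)"
proof -
  obtain N where "q \<in> Q" and N: "\<And>z. z \<in> residual q \<Longrightarrow> shift Sig z \<le> N"
    using assms by (auto simp: fs_states_def finite_shift_def bdd_above_def)
  then have "sem Sig Gam ` residual q = proj_blocks N q"
    using proj_blocks_sound proj_blocks_complete by blast
  then show ?thesis using recognizable_proj_blocks[OF \<open>q \<in> Q\<close>] by simp
qed

end

section \<open>The synchronizing automaton\<close>

type_synonym 'a sync_cfg = "nat \<times> nat \<times> 'a list \<times> 'a list \<times> 'a list \<times> 'a list"

context shiftlag_bounded_dfa
begin

definition short_words :: "'a list set" where
  "short_words = {u. set u \<subseteq> Alph \<and> length u \<le> lag_limit}"

text \<open>A configuration \<open>(p, p', a, b, c, d)\<close> records the states reached by a word and by a guessed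
  synchronization of it, and the \<open>Sig\<close>- and \<open>Gam\<close>-letters that one of them has read ahead of the
  other (\<open>a, c\<close> for the word, \<open>b, d\<close> for the guess). The automaton is only needed as long as the
  word has not reached a finite-shift state, which keeps the buffers short.\<close>
definition configs :: "'a sync_cfg set" where
  "configs = (Q - fs_states) \<times> Q \<times> short_words \<times> short_words \<times> short_words \<times> short_words"

lemma finite_configs: "finite configs"
proof -
  have "finite short_words"
    unfolding short_words_def using finite_lists_length_le[of Alph] finite_Sig finite_Gam by simp
  then show ?thesis unfolding configs_def using finite_Q by simp
qed

definition sync_step :: "'a sync_cfg \<Rightarrow> 'a \<Rightarrow> 'a sync_cfg \<Rightarrow> bool" where
  "sync_step = (\<lambda>(p, p', a, b, c, d) x (p2, p2', a2, b2, c2, d2).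
     \<exists>y\<in>Alph. p2 = \<delta> p x \<and> p2' = \<delta> p' y
       \<and> buffer_step a b (filter (\<lambda>l. l \<in> Sig) [x]) (filter (\<lambda>l. l \<in> Sig) [y]) a2 b2
       \<and> buffer_step c d (filter (\<lambda>l. l \<in> Gam) [x]) (filter (\<lambda>l. l \<in> Gam) [y]) c2 d2)"

lemma sync_step_iff:
  "sync_step (p, p', a, b, c, d) x (p2, p2', a2, b2, c2, d2) \<longleftrightarrow>
     (\<exists>y\<in>Alph. p2 = \<delta> p x \<and> p2' = \<delta> p' y
       \<and> buffer_step a b (filter (\<lambda>l. l \<in> Sig) [x]) (filter (\<lambda>l. l \<in> Sig) [y]) a2 b2
       \<and> buffer_step c d (filter (\<lambda>l. l \<in> Gam) [x]) (filter (\<lambda>l. l \<in> Gam) [y]) c2 d2)"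
  by (simp add: sync_step_def)

definition sync_trans :: "('a sync_cfg \<times> 'a \<times> 'a sync_cfg) set" where
  "sync_trans = {(s, x, t). sync_step s x t \<and> t \<in> configs}"

definition init_cfg :: "'a sync_cfg" where
  "init_cfg = (q0, q0, [], [], [], [])"

definition sync_prefixes :: "'a sync_cfg \<Rightarrow> 'a list set" where
  "sync_prefixes cf = {x \<in> lists Alph. \<exists>s\<in>{init_cfg} \<inter> configs. \<exists>t\<in>{cf}. run sync_trans s x t}"

definition final_cfgs :: "'a sync_cfg set" where
  "final_cfgs = {cf \<in> configs. fst (snd cf) \<in> fs_states}"

definition catch_up :: "'a sync_cfg \<Rightarrow> 'a list set" where
  "catch_up = (\<lambda>(p, p', a, b, c, d). {z \<in> lists Alph. \<exists>z'\<in>residual p'.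
     b @ filter (\<lambda>l. l \<in> Sig) z' = a @ filter (\<lambda>l. l \<in> Sig) z
     \<and> d @ filter (\<lambda>l. l \<in> Gam) z' = c @ filter (\<lambda>l. l \<in> Gam) z})"

definition improvable_lang :: "'a list set" where
  "improvable_lang = (\<Union>cf\<in>final_cfgs. conc (sync_prefixes cf) (catch_up cf))"

definition improvable :: "'a list \<Rightarrow> bool" where
  "improvable w \<longleftrightarrow> (\<exists>w'\<in>residual q0. sem Sig Gam w' = sem Sig Gam w \<and>
     (\<exists>i\<le>length w. foldl \<delta> q0 (take i w') \<in> fs_states \<and> foldl \<delta> q0 (take i w) \<notin> fs_states))"

lemma nerode_regular_catch_up:
  assumes "cf \<in> final_cfgs"
  shows "nerode_regular Alph (catch_up cf)"
proof -
  obtain p p' a b c d where cf: "cf = (p, p', a, b, c, d)" by (cases cf)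
  with assms have "p' \<in> fs_states" "b \<in> lists Alph" "d \<in> lists Alph"
    by (auto simp: final_cfgs_def configs_def short_words_def)
  let ?R = "{(s', t'). \<exists>(s, t)\<in>sem Sig Gam ` residual p'. b @ s = a @ s' \<and> d @ t = c @ t'}"
  have eq: "catch_up cf = {z \<in> lists Alph. (filter (\<lambda>l. l \<in> Sig) z, filter (\<lambda>l. l \<in> Gam) z) \<in> ?R}"
    unfolding cf catch_up_def by (simp add: sem_def proj_i_def proj_o_def)
  have "recognizable Alph ?R"
    by (rule recognizable_rel_image[OF recognizable_sem_residual[OF \<open>p' \<in> fs_states\<close>]])
      (use nerode_regular_realign \<open>b \<in> lists Alph\<close> \<open>d \<in> lists Alph\<close> in auto)
  then show ?thesis unfolding eq by (rule nerode_regular_filter_pair_preimage)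
qed

lemma nerode_regular_improvable_lang: "nerode_regular Alph improvable_lang"
  unfolding improvable_lang_def
proof (rule nerode_regular_UN)
  show "finite final_cfgs"
    unfolding final_cfgs_def using finite_configs by simp
  fix cf assume "cf \<in> final_cfgs"
  have "nerode_regular Alph (sync_prefixes cf)"
    unfolding sync_prefixes_def
    by (rule nerode_regular_nfa[OF finite_configs]) (auto simp: sync_trans_def)
  then show "nerode_regular Alph (conc (sync_prefixes cf) (catch_up cf))"
    using nerode_regular_conc nerode_regular_catch_up[OF \<open>cf \<in> final_cfgs\<close>] by blast
qed

lemma run_sync_trans_witness:
  "run sync_trans (p, p', a, b, c, d) x (P, P', A, B, C, D) \<Longrightarrow>
   \<exists>x'\<in>lists Alph. length x' = length x \<and> P = foldl \<delta> p x \<and> P' = foldl \<delta> p' x' \<and>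
     (\<exists>r. a @ filter (\<lambda>l. l \<in> Sig) x = r @ A \<and> b @ filter (\<lambda>l. l \<in> Sig) x' = r @ B) \<and>
     (\<exists>r. c @ filter (\<lambda>l. l \<in> Gam) x = r @ C \<and> d @ filter (\<lambda>l. l \<in> Gam) x' = r @ D)"
proof (induction x arbitrary: p p' a b c d)
  case Nil
  then show ?case by (intro bexI[of _ "[]"]) auto
next
  case (Cons x0 x)
  obtain p2 p2' a2 b2 c2 d2 where step: "sync_step (p, p', a, b, c, d) x0 (p2, p2', a2, b2, c2, d2)"
    and run: "run sync_trans (p2, p2', a2, b2, c2, d2) x (P, P', A, B, C, D)"
    using Cons.prems by (auto simp: sync_trans_def)
  obtain y where y: "y \<in> Alph" "p2 = \<delta> p x0" "p2' = \<delta> p' y"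
    "buffer_step a b (filter (\<lambda>l. l \<in> Sig) [x0]) (filter (\<lambda>l. l \<in> Sig) [y]) a2 b2"
    "buffer_step c d (filter (\<lambda>l. l \<in> Gam) [x0]) (filter (\<lambda>l. l \<in> Gam) [y]) c2 d2"
    using step unfolding sync_step_iff by blast
  obtain x' where x': "x' \<in> lists Alph" "length x' = length x" "P = foldl \<delta> p2 x" "P' = foldl \<delta> p2' x'"
    "\<exists>r. a2 @ filter (\<lambda>l. l \<in> Sig) x = r @ A \<and> b2 @ filter (\<lambda>l. l \<in> Sig) x' = r @ B"
    "\<exists>r. c2 @ filter (\<lambda>l. l \<in> Gam) x = r @ C \<and> d2 @ filter (\<lambda>l. l \<in> Gam) x' = r @ D"
    using Cons.IH[OF run] by blast
  have "filter P (e # u) = filter P [e] @ filter P u" for P e u by simp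
  then show ?case
    using x' y buffer_step_append[OF y(4) x'(5)] buffer_step_append[OF y(5) x'(6)]
    by (intro bexI[of _ "y # x'"]) auto
qed

lemma improvable_lang_sound:
  assumes "w \<in> improvable_lang"
  shows "improvable w"
proof -
  obtain P P' A B C D where cf: "(P, P', A, B, C, D) \<in> final_cfgs"
    and "w \<in> conc (sync_prefixes (P, P', A, B, C, D)) (catch_up (P, P', A, B, C, D))"
    using assms unfolding improvable_lang_def by auto
  then obtain x z where w: "w = x @ z"
    and "x \<in> sync_prefixes (P, P', A, B, C, D)" "z \<in> catch_up (P, P', A, B, C, D)"
    unfolding conc_def by blast
  then have run: "run sync_trans init_cfg x (P, P', A, B, C, D)" and z': "\<exists>z'\<in>residual P'.
      B @ filter (\<lambda>l. l \<in> Sig) z' = A @ filter (\<lambda>l. l \<in> Sig) z \<and>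
      D @ filter (\<lambda>l. l \<in> Gam) z' = C @ filter (\<lambda>l. l \<in> Gam) z"
    unfolding sync_prefixes_def catch_up_def by auto
  obtain x' rI rO where x': "x' \<in> lists Alph" "length x' = length x" "P = foldl \<delta> q0 x" "P' = foldl \<delta> q0 x'"
    and rI: "filter (\<lambda>l. l \<in> Sig) x = rI @ A" "filter (\<lambda>l. l \<in> Sig) x' = rI @ B"
    and rO: "filter (\<lambda>l. l \<in> Gam) x = rO @ C" "filter (\<lambda>l. l \<in> Gam) x' = rO @ D"
    using run_sync_trans_witness[OF run[unfolded init_cfg_def]] by auto
  obtain z' where z'L: "z' \<in> residual P'"
    and z'S: "B @ filter (\<lambda>l. l \<in> Sig) z' = A @ filter (\<lambda>l. l \<in> Sig) z"
    and z'G: "D @ filter (\<lambda>l. l \<in> Gam) z' = C @ filter (\<lambda>l. l \<in> Gam) z"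
    using z' by blast
  have "x' @ z' \<in> residual q0" using z'L x' residual_append_iff by blast
  moreover have "sem Sig Gam (x' @ z') = sem Sig Gam w"
    unfolding w sem_def proj_i_def proj_o_def using rI rO z'S z'G by simp
  moreover have "take (length x) (x' @ z') = x'" "take (length x) w = x"
    using x'(2) w by simp_all
  moreover have "P \<notin> fs_states" "P' \<in> fs_states"
    using cf by (auto simp: final_cfgs_def configs_def)
  ultimately show ?thesis unfolding improvable_def using x' w by (metis le_add1 length_append)
qed

definition sync_cfg :: "'a list \<Rightarrow> 'a list \<Rightarrow> 'a sync_cfg" where
  "sync_cfg x x' = (foldl \<delta> q0 x, foldl \<delta> q0 x', ahead (\<lambda>l. l \<in> Sig) x x', ahead (\<lambda>l. l \<in> Sig) x' x,
     ahead (\<lambda>l. l \<in> Gam) x x', ahead (\<lambda>l. l \<in> Gam) x' x)"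

lemma sync_cfg_in_configs:
  assumes "x \<in> lists Alph" "x' \<in> lists Alph" "length x = length x'" "foldl \<delta> q0 x \<notin> fs_states"
    "\<bar>imbalance Sig Gam x'\<bar> \<le> int lag_limit + 1"
  shows "sync_cfg x x' \<in> configs"
proof -
  have "\<bar>imbalance Sig Gam x\<bar> \<le> int lag_limit"
    using abs_imbalance_le_lag_limit[OF assms(1,4)] .
  then have "length (ahead P u v) \<le> lag_limit"
    if "P = (\<lambda>l. l \<in> Sig) \<or> P = (\<lambda>l. l \<in> Gam)" "(u, v) = (x, x') \<or> (u, v) = (x', x)" for P u v
    using that two_length_ahead_le[OF disjoint assms(1,2,3)] two_length_ahead_le[OF disjoint assms(2,1)]
      assms(3,5) by fastforce
  moreover have "set (ahead P u v) \<subseteq> Alph" if "u \<in> lists Alph" for P u v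
    using that by (auto simp: ahead_def dest!: in_set_dropD)
  ultimately show ?thesis
    using assms foldl_in_Q[OF q0_in_Q] unfolding sync_cfg_def configs_def short_words_def by auto
qed

lemma sync_cfg_step:
  assumes "w \<in> lists Alph" "w' \<in> lists Alph" "sem Sig Gam w' = sem Sig Gam w" "j < length w"
    "length w' = length w" "sync_cfg (take (Suc j) w) (take (Suc j) w') \<in> configs"
  shows "(sync_cfg (take j w) (take j w'), w ! j, sync_cfg (take (Suc j) w) (take (Suc j) w')) \<in> sync_trans"
proof -
  have filters: "filter (\<lambda>l. l \<in> Sig) w = filter (\<lambda>l. l \<in> Sig) w'"
    "filter (\<lambda>l. l \<in> Gam) w = filter (\<lambda>l. l \<in> Gam) w'"
    using assms(3) by (simp_all add: sem_def proj_i_def proj_o_def)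
  have "j < length w'" using assms(4,5) by simp
  have "w' ! j \<in> Alph" by (metis assms(2,4,5) in_listsD nth_mem)
  moreover have "foldl \<delta> q0 (take (Suc j) w) = \<delta> (foldl \<delta> q0 (take j w)) (w ! j)"
    "foldl \<delta> q0 (take (Suc j) w') = \<delta> (foldl \<delta> q0 (take j w')) (w' ! j)"
    using assms(4,5) by (simp_all add: take_Suc_conv_app_nth)
  ultimately show ?thesis
    using assms(6) buffer_step_ahead[OF filters(1) assms(4) \<open>j < length w'\<close>]
      buffer_step_ahead[OF filters(2) assms(4) \<open>j < length w'\<close>]
    unfolding sync_trans_def sync_cfg_def mem_Collect_eq prod.case sync_step_iff by blast
qed

lemma drop_in_catch_up:
  assumes "w \<in> lists Alph" "w' \<in> residual q0" "sem Sig Gam w' = sem Sig Gam w"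
  shows "drop i w \<in> catch_up (sync_cfg (take i w) (take i w'))"
proof -
  have "take i w' \<in> lists Alph" using assms(2) by (auto simp: residual_def dest: in_set_takeD)
  then have "drop i w' \<in> residual (foldl \<delta> q0 (take i w'))"
    using assms(2) residual_append_iff[of "take i w'" "drop i w'" q0] by simp
  moreover have "drop i w \<in> lists Alph" using assms(1) by (auto dest: in_set_dropD)
  moreover have "ahead P (take i w') (take i w) @ filter P (drop i w')
      = ahead P (take i w) (take i w') @ filter P (drop i w)" if "filter P w = filter P w'" for P
    using that by (intro ahead_append_swap) (metis append_take_drop_id filter_append)
  moreover have "filter (\<lambda>l. l \<in> Sig) w = filter (\<lambda>l. l \<in> Sig) w'"
    "filter (\<lambda>l. l \<in> Gam) w = filter (\<lambda>l. l \<in> Gam) w'"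
    using assms(3) by (simp_all add: sem_def proj_i_def proj_o_def)
  ultimately show ?thesis
    unfolding sync_cfg_def catch_up_def prod.case mem_Collect_eq by blast
qed

end

section \<open>Minimal synchronizations\<close>

context shiftlag_bounded_dfa
begin

text \<open>Taking the first position where the synchronization reaches a finite-shift state keeps all
  earlier prefixes of both words in other states, hence of bounded lag.\<close>
lemma improvable_first_position:
  assumes "w \<in> residual q0" "improvable w"
  obtains w' i where "w' \<in> residual q0" "sem Sig Gam w' = sem Sig Gam w" "i \<le> length w"
    "foldl \<delta> q0 (take i w') \<in> fs_states"
    "\<And>j. j < i \<Longrightarrow> foldl \<delta> q0 (take j w') \<notin> fs_states"
    "\<And>j. j \<le> i \<Longrightarrow> foldl \<delta> q0 (take j w) \<notin> fs_states"
proof -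
  obtain w' i where w': "w' \<in> residual q0" "sem Sig Gam w' = sem Sig Gam w"
    and i: "i \<le> length w" "foldl \<delta> q0 (take i w') \<in> fs_states" "foldl \<delta> q0 (take i w) \<notin> fs_states"
    using assms(2) unfolding improvable_def by blast
  define i0 where "i0 = (LEAST j. foldl \<delta> q0 (take j w') \<in> fs_states)"
  have "i0 \<le> i" and fs: "foldl \<delta> q0 (take i0 w') \<in> fs_states"
    using i(2) unfolding i0_def by (auto intro: Least_le LeastI)
  have w'_before: "foldl \<delta> q0 (take j w') \<notin> fs_states" if "j < i0" for j
    using not_less_Least[of j] that unfolding i0_def by blast
  have "w \<in> lists Alph" using assms(1) by (simp add: residual_def)
  then have w_before: "foldl \<delta> q0 (take j w) \<notin> fs_states" if "j \<le> i0" for j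
    using fs_states_take_mono i(3) that \<open>i0 \<le> i\<close> by (meson le_trans)
  show thesis
    by (rule that[OF w', of i0, OF _ fs w'_before w_before]) (use \<open>i0 \<le> i\<close> i(1) in simp_all)
qed

lemma improvable_lang_complete:
  assumes w: "w \<in> residual q0" and "improvable w"
  shows "w \<in> improvable_lang"
proof -
  obtain w' i0 where w': "w' \<in> residual q0" and same: "sem Sig Gam w' = sem Sig Gam w"
    and "i0 \<le> length w" and fs: "foldl \<delta> q0 (take i0 w') \<in> fs_states"
    and w'_before: "\<And>j. j < i0 \<Longrightarrow> foldl \<delta> q0 (take j w') \<notin> fs_states"
    and w_before: "\<And>j. j \<le> i0 \<Longrightarrow> foldl \<delta> q0 (take j w) \<notin> fs_states"
    using improvable_first_position[OF assms] by blast
  have wA: "w \<in> lists Alph" and w'A: "w' \<in> lists Alph" using w w' by (simp_all add: residual_def)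
  have len: "length w' = length w"
    using same length_eq_length_proj[OF disjoint wA] length_eq_length_proj[OF disjoint w'A]
    by (simp add: sem_def)
  define cfg where "cfg j = sync_cfg (take j w) (take j w')" for j
  have cfg_configs: "cfg j \<in> configs" if "j \<le> i0" for j
    unfolding cfg_def
    using w_before[OF that] abs_imbalance_take_le_Suc_lag_limit[OF w'A, of j] w'_before that len wA w'A
    by (intro sync_cfg_in_configs) (auto dest: in_set_takeD)
  have "run sync_trans (cfg 0) (take i0 w) (cfg i0)"
    unfolding cfg_def using \<open>i0 \<le> length w\<close>
    by (intro run_take_steps sync_cfg_step[OF wA w'A same] cfg_configs[unfolded cfg_def]) (simp_all add: len)
  moreover have "cfg 0 = init_cfg" by (simp add: cfg_def sync_cfg_def init_cfg_def ahead_def)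
  ultimately have prefix: "take i0 w \<in> sync_prefixes (cfg i0)"
    using cfg_configs[of 0] wA unfolding sync_prefixes_def by (auto dest: in_set_takeD)
  have final: "cfg i0 \<in> final_cfgs"
    using cfg_configs[of i0] fs by (simp add: final_cfgs_def cfg_def sync_cfg_def)
  have "drop i0 w \<in> catch_up (cfg i0)"
    unfolding cfg_def using drop_in_catch_up[OF wA w' same] .
  with prefix have "w \<in> conc (sync_prefixes (cfg i0)) (catch_up (cfg i0))"
    unfolding conc_def by (intro CollectI exI[of _ "take i0 w"] exI[of _ "drop i0 w"]) simp
  then show ?thesis unfolding improvable_lang_def by (rule UN_I[OF final])
qed
lemma minsync_iff_not_improvable:
  assumes w: "w \<in> residual q0"
  shows "w \<in> minsync Sig Gam (residual q0) (residual q0) \<longleftrightarrow> \<not> improvable w"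
proof -
  have "preceq Sig Gam (residual q0) w w' \<longleftrightarrow>
      (\<forall>i\<le>length w. foldl \<delta> q0 (take i w') \<in> fs_states \<longrightarrow> foldl \<delta> q0 (take i w) \<in> fs_states)"
    if "w' \<in> residual q0" "sem Sig Gam w' = sem Sig Gam w" for w'
  proof -
    have "take i w \<in> lists Alph" "take i w' \<in> lists Alph" for i
      using w that(1) by (auto simp: residual_def dest: in_set_takeD)
    then show ?thesis unfolding preceq_def using w that RegFS_lquot_iff by auto
  qed
  then show ?thesis unfolding minsync_def improvable_def using w by blast
qed

lemma minsync_eq: "minsync Sig Gam (residual q0) (residual q0) = residual q0 - improvable_lang"
  using minsync_iff_not_improvable improvable_lang_sound improvable_lang_complete
  unfolding minsync_def by blast

end

theorem mainTheorem13:
  fixes Sig Gam :: "'a set" and T :: "'a list set"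
  assumes "finite Sig" and "finite Gam" and "Sig \<inter> Gam = {}"
    and "regular_lang (Sig \<union> Gam) T"
    and "finite_shiftlag Sig Gam T"
  shows "regular_lang (Sig \<union> Gam) (minsync Sig Gam T T)"
proof -
  obtain Q q0 \<delta> F where dfa: "T \<subseteq> lists (Sig \<union> Gam)" "finite (Q::nat set)" "q0 \<in> Q"
    "\<forall>q\<in>Q. \<forall>a\<in>Sig \<union> Gam. \<delta> q a \<in> Q" "F \<subseteq> Q"
    "\<forall>w\<in>lists (Sig \<union> Gam). w \<in> T \<longleftrightarrow> foldl \<delta> q0 w \<in> F"
    using assms(4) unfolding regular_lang_def by blast
  then have T: "T = {w \<in> lists (Sig \<union> Gam). foldl \<delta> q0 w \<in> F}" by blast
  obtain K where "\<And>w. w \<in> T \<Longrightarrow> shiftlag Sig Gam w \<le> K"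
    using assms(5) unfolding finite_shiftlag_def bdd_above_def by blast
  then interpret shiftlag_bounded_dfa Sig Gam Q q0 \<delta> F K
    using assms(1-3) dfa(2-5) by unfold_locales (auto simp: T)
  have "regular_lang Alph (residual q0 - improvable_lang)"
    using finite_Sig finite_Gam by (intro nerode_regular_imp_regular_lang nerode_regular_Diff
        nerode_regular_residual[OF q0_in_Q] nerode_regular_improvable_lang) simp_all
  moreover have "T = residual q0" unfolding residual_def T ..
  ultimately show ?thesis using minsync_eq by simp
qed

end
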